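(* Let $G_1,G_2$ be bridgeless cubic graphs, $x_1y_1\in E(G_1)$, $x_2y_2\in E(G_2)$, and $G=(G_1,x_1y_1)\oplus(G_2,x_2y_2)$. Then: (i) Suppose $x_1y_1$ is lonely in $G_1$, and let $e\neq x_2y_2$ be a lonely edge of $G_2$. Then $e$ is lonely in $G$ if and only if $x_2y_2$ belongs to the unique perfect matching of $G_2$ containing $e$. Moreover, if (in addition to $x_1y_1$ being lonely in $G_1$) $x_2y_2$ is lonely in $G_2$, then both $x_1x_2$ and $y_1y_2$ are lonely in $G$. (ii) Suppose $x_1y_1$ is not lonely in $G_1$. Then no edge of $E(G_2)\setminus\{x_2y_2\}$ is lonely in $G$, and neither $x_1x_2$ nor $y_1y_2$ is lonely in $G$. (iii) For each $i\in\{1,2\}$, if an edge of $G_i$ different from $x_iy_i$ is not lonely in $G_i$, then it is not lonely in $G$.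
   Context: Graphs may have parallel edges. In a bridgeless cubic graph, an edge is lonely if it belongs to exactly one perfect matching. A 2-cut-connection of bridgeless cubic graphs $G_1,G_2$ along edges $x_1y_1\in E(G_1)$, $x_2y_2\in E(G_2)$ is the graph $(G_1,x_1y_1)\oplus(G_2,x_2y_2)$ obtained from the disjoint union of $G_1$ and $G_2$ by deleting $x_1y_1$ and $x_2y_2$ and adding the edges $x_1x_2$ and $y_1y_2$. Edges of $G_i$ other than $x_iy_i$ are identified with the corresponding edges of $G$. *)

theory Defs
  imports Main
begin

text \<open>Finite loopless multigraphs: edges are abstract identifiers, each with a
  two-element set of end vertices (parallel edges allowed).\<close>

record ('v,'e) mgraph =
  verts :: "'v set"
  edges :: "'e set"
  ends  :: "'e \<Rightarrow> 'v set"

definition mgraph :: "('v,'e) mgraph \<Rightarrow> bool" where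
  "mgraph G \<longleftrightarrow> finite (verts G) \<and> finite (edges G) \<and>
     (\<forall>e\<in>edges G. ends G e \<subseteq> verts G \<and> card (ends G e) = 2)"

definition degree :: "('v,'e) mgraph \<Rightarrow> 'v \<Rightarrow> nat" where
  "degree G v = card {e\<in>edges G. v \<in> ends G e}"

definition cubic :: "('v,'e) mgraph \<Rightarrow> bool" where
  "cubic G \<longleftrightarrow> mgraph G \<and> (\<forall>v\<in>verts G. degree G v = 3)"

definition adj_in :: "('v,'e) mgraph \<Rightarrow> 'e set \<Rightarrow> 'v \<Rightarrow> 'v \<Rightarrow> bool" where
  "adj_in G F u v \<longleftrightarrow> (\<exists>e\<in>F. e \<in> edges G \<and> ends G e = {u, v} \<and> u \<noteq> v)"

definition is_bridge :: "('v,'e) mgraph \<Rightarrow> 'e \<Rightarrow> bool" where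
  "is_bridge G e \<longleftrightarrow> e \<in> edges G \<and>
     (\<exists>u v. ends G e = {u, v} \<and> \<not> (adj_in G (edges G - {e}))\<^sup>*\<^sup>* u v)"

definition bridgeless :: "('v,'e) mgraph \<Rightarrow> bool" where
  "bridgeless G \<longleftrightarrow> (\<forall>e\<in>edges G. \<not> is_bridge G e)"

definition perfect_matching :: "('v,'e) mgraph \<Rightarrow> 'e set \<Rightarrow> bool" where
  "perfect_matching G M \<longleftrightarrow> M \<subseteq> edges G \<and>
     (\<forall>v\<in>verts G. card {e\<in>M. v \<in> ends G e} = 1)"

definition lonely :: "('v,'e) mgraph \<Rightarrow> 'e \<Rightarrow> bool" where
  "lonely G e \<longleftrightarrow> e \<in> edges G \<and> card {M. perfect_matching G M \<and> e \<in> M} = 1"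

text \<open>Edges of a 2-cut-connection: old edges of G1, old edges of G2, and the
  two new edges x1x2 (XX) and y1y2 (YY).\<close>
datatype ('a,'b) cedge = E1 'a | E2 'b | XX | YY

definition cut_conn ::
  "('v1,'e1) mgraph \<Rightarrow> 'e1 \<Rightarrow> 'v1 \<Rightarrow> 'v1 \<Rightarrow>
   ('v2,'e2) mgraph \<Rightarrow> 'e2 \<Rightarrow> 'v2 \<Rightarrow> 'v2 \<Rightarrow> ('v1 + 'v2, ('e1,'e2) cedge) mgraph" where
  "cut_conn G1 f1 x1 y1 G2 f2 x2 y2 =
     \<lparr> verts = Inl ` verts G1 \<union> Inr ` verts G2,
       edges = E1 ` (edges G1 - {f1}) \<union> E2 ` (edges G2 - {f2}) \<union> {XX, YY},
       ends = (\<lambda>e. case e of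
                  E1 a \<Rightarrow> Inl ` ends G1 a
                | E2 b \<Rightarrow> Inr ` ends G2 b
                | XX \<Rightarrow> {Inl x1, Inr x2}
                | YY \<Rightarrow> {Inl y1, Inr y2}) \<rparr>"

end

theory Submission
  imports Defs
begin

text \<open>By Tutte's theorem, proved here by Lovasz' switching argument, every edge of a bridgeless
  cubic graph lies in a perfect matching (Petersen); applying this to the two other edges at an
  end of an edge gives at least two perfect matchings avoiding it. In the 2-cut-connection the
  new edges \<open>x1x2\<close> and \<open>y1y2\<close> form a 2-edge cut, so by parity a perfect matching of \<open>G\<close> uses
  both or neither. Hence the perfect matchings of \<open>G\<close> correspond to the pairs of perfect
  matchings of \<open>G1\<close> and \<open>G2\<close> that agree on using \<open>x1y1\<close> and \<open>x2y2\<close>, and the number of them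
  through an edge of \<open>G2\<close> is \<open>a1 * c + b1 * d\<close>: here \<open>a1\<close>, \<open>b1\<close> count the perfect matchings
  of \<open>G1\<close> containing resp. avoiding \<open>x1y1\<close>, and \<open>c\<close>, \<open>d\<close> those of \<open>G2\<close> through the edge that
  contain resp. avoid \<open>x2y2\<close>. With \<open>a1 \<ge> 1\<close> and \<open>b1 \<ge> 2\<close> every claim becomes arithmetic.\<close>

section \<open>Tutte's theorem\<close>

lemma card_Collect_eq_1_iff: "card {x. P x} = 1 \<longleftrightarrow> (\<exists>!x. P x)"
proof
  assume "card {x. P x} = 1"
  then obtain y where "{x. P x} = {y}" by (auto simp: card_1_singleton_iff)
  then show "\<exists>!x. P x" by (metis mem_Collect_eq singletonD singletonI)
next
  assume "\<exists>!x. P x"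
  then obtain y where "{x. P x} = {y}" by blast
  then show "card {x. P x} = 1" by simp
qed

lemma incidence_double_counting:
  assumes "finite W" "finite F"
  shows "(\<Sum>v\<in>W. card {e\<in>F. v \<in> h e}) = (\<Sum>e\<in>F. card (h e \<inter> W))"
proof -
  have "(\<Sum>v\<in>W. card {e\<in>F. v \<in> h e}) = (\<Sum>v\<in>W. \<Sum>e\<in>F. if v \<in> h e then 1 else 0)"
    using assms by (simp add: sum.inter_filter[symmetric])
  also have "\<dots> = (\<Sum>e\<in>F. \<Sum>v\<in>W. if v \<in> h e then 1 else 0)"
    by (rule sum.swap)
  also have "\<dots> = (\<Sum>e\<in>F. card (h e \<inter> W))"
    using assms by (simp add: sum.inter_filter[symmetric] Int_def conj_commute)
  finally show ?thesis .
qed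

definition induced_rel :: "('a \<Rightarrow> 'a \<Rightarrow> bool) \<Rightarrow> 'a set \<Rightarrow> 'a \<Rightarrow> 'a \<Rightarrow> bool" where
  "induced_rel A W u v \<longleftrightarrow> u \<in> W \<and> v \<in> W \<and> A u v"

definition component :: "('a \<Rightarrow> 'a \<Rightarrow> bool) \<Rightarrow> 'a set \<Rightarrow> 'a \<Rightarrow> 'a set" where
  "component A W x = {y. (induced_rel A W)\<^sup>*\<^sup>* x y}"

definition components :: "('a \<Rightarrow> 'a \<Rightarrow> bool) \<Rightarrow> 'a set \<Rightarrow> 'a set set" where
  "components A W = component A W ` W"

definition odd_components :: "('a \<Rightarrow> 'a \<Rightarrow> bool) \<Rightarrow> 'a set \<Rightarrow> 'a set set" where
  "odd_components A W = {C\<in>components A W. odd (card C)}"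

definition tutte_condition :: "('a \<Rightarrow> 'a \<Rightarrow> bool) \<Rightarrow> 'a set \<Rightarrow> bool" where
  "tutte_condition A V \<longleftrightarrow> (\<forall>S\<subseteq>V. card (odd_components A (V - S)) \<le> card S)"

text \<open>A perfect matching of the graph with vertex set \<open>W\<close> and adjacency \<open>A\<close>, encoded as the
  fixed-point-free involution sending each vertex to its partner.\<close>

definition perfect_pairing :: "('a \<Rightarrow> 'a \<Rightarrow> bool) \<Rightarrow> 'a set \<Rightarrow> ('a \<Rightarrow> 'a) \<Rightarrow> bool" where
  "perfect_pairing A W p \<longleftrightarrow> (\<forall>v\<in>W. p v \<in> W \<and> p v \<noteq> v \<and> p (p v) = v \<and> A v (p v))"

definition add_edge :: "('a \<Rightarrow> 'a \<Rightarrow> bool) \<Rightarrow> 'a \<Rightarrow> 'a \<Rightarrow> 'a \<Rightarrow> 'a \<Rightarrow> bool" where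
  "add_edge A x y u v \<longleftrightarrow> A u v \<or> (u = x \<and> v = y) \<or> (u = y \<and> v = x)"

lemma symp_add_edge: "symp A \<Longrightarrow> symp (add_edge A x y)"
  by (auto simp: symp_def add_edge_def)

lemma component_subset: "x \<in> W \<Longrightarrow> component A W x \<subseteq> W"
proof
  fix y assume "x \<in> W" "y \<in> component A W x"
  then have "(induced_rel A W)\<^sup>*\<^sup>* x y" "x \<in> W" by (simp_all add: component_def)
  then show "y \<in> W" by (induction rule: rtranclp_induct) (auto simp: induced_rel_def)
qed

lemma in_component: "x \<in> component A W x"
  by (simp add: component_def)

lemma component_eq:
  assumes "symp A" "y \<in> component A W x"
  shows "component A W y = component A W x"
proof -
  have "symp (induced_rel A W)" using assms(1) by (auto simp: symp_def induced_rel_def)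
  then have "(induced_rel A W)\<^sup>*\<^sup>* y x" using assms(2)
    by (simp add: component_def symp_rtranclp sympD)
  then show ?thesis using assms(2) unfolding component_def by (auto intro: rtranclp_trans)
qed

lemma components_eq_component:
  assumes "symp A" "C \<in> components A W" "y \<in> C"
  shows "C = component A W y"
  using assms component_eq by (fastforce simp: components_def)

lemma components_disjoint:
  assumes "symp A" "C1 \<in> components A W" "C2 \<in> components A W" "C1 \<noteq> C2"
  shows "C1 \<inter> C2 = {}"
  using components_eq_component[OF assms(1,2)] components_eq_component[OF assms(1,3)] assms(4)
  by blast

lemma components_subset: "C \<in> components A W \<Longrightarrow> C \<subseteq> W"
  by (auto simp: components_def dest: component_subset)

lemma components_nonempty: "C \<in> components A W \<Longrightarrow> C \<noteq> {}"
  using in_component by (fastforce simp: components_def)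

lemma Union_components: "\<Union>(components A W) = W"
  using components_subset in_component by (fastforce simp: components_def)

lemma components_closed:
  assumes "symp A" "C \<in> components A W" "u \<in> C" "v \<in> W" "A u v"
  shows "v \<in> C"
proof -
  have "u \<in> W" using assms(2,3) components_subset by blast
  then have "v \<in> component A W u"
    using assms(4,5) by (simp add: component_def induced_rel_def r_into_rtranclp)
  then show ?thesis using components_eq_component[OF assms(1-3)] by simp
qed

lemma finite_components: "finite W \<Longrightarrow> finite (components A W)"
  by (simp add: components_def)

lemma finite_odd_components: "finite W \<Longrightarrow> finite (odd_components A W)"
  by (simp add: odd_components_def finite_components)

lemma card_eq_sum_card_components:
  assumes "symp A" "finite W"
  shows "card W = (\<Sum>C\<in>components A W. card C)"
proof -
  have "card (\<Union>(components A W)) = (\<Sum>C\<in>components A W. card C)"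
  proof (rule card_Union_disjoint)
    show "pairwise disjnt (components A W)"
      using components_disjoint[OF assms(1)] by (auto simp: pairwise_def disjnt_def)
    show "finite C" if "C \<in> components A W" for C
      using finite_subset[OF components_subset[OF that] assms(2)] .
  qed
  then show ?thesis by (simp add: Union_components)
qed

lemma even_card_iff_even_card_odd_components:
  assumes "symp A" "finite W"
  shows "even (card W) \<longleftrightarrow> even (card (odd_components A W))"
  using card_eq_sum_card_components[OF assms]
    even_sum_iff[OF finite_components[OF assms(2)], of card]
  by (simp add: odd_components_def)

lemma component_mono:
  assumes "\<And>u v. A u v \<Longrightarrow> A' u v"
  shows "component A W x \<subseteq> component A' W x"
proof -
  have "induced_rel A W \<le> induced_rel A' W" using assms by (auto simp: induced_rel_def)
  then show ?thesis unfolding component_def by (auto dest: rtranclp_mono[THEN predicate2D])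
qed

text \<open>An odd component for the larger relation is a disjoint union of components for the
  smaller one, so one of these is odd.\<close>

lemma odd_component_contains_odd_component:
  assumes "symp A" "symp A'" "\<And>u v. A u v \<Longrightarrow> A' u v" "finite W" "C' \<in> odd_components A' W"
  shows "\<exists>C\<in>odd_components A W. C \<subseteq> C'"
proof (rule ccontr)
  assume none: "\<not> ?thesis"
  have C': "C' \<in> components A' W" "odd (card C')" using assms(5) by (auto simp: odd_components_def)
  have "C' \<subseteq> W" using C'(1) by (rule components_subset)
  let ?F = "component A W ` C'"
  have F_comp: "C \<in> components A W" if "C \<in> ?F" for C
    using that \<open>C' \<subseteq> W\<close> by (auto simp: components_def)
  have F_sub: "C \<subseteq> C'" if "C \<in> ?F" for C
  proof -
    obtain y where y: "y \<in> C'" "C = component A W y" using \<open>C \<in> ?F\<close> by blast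
    then have "C \<subseteq> component A' W y" using component_mono[OF assms(3)] by simp
    then show ?thesis using components_eq_component[OF assms(2) C'(1) y(1)] by simp
  qed
  have "\<Union>?F = C'"
  proof
    show "\<Union>?F \<subseteq> C'" using F_sub by blast
    show "C' \<subseteq> \<Union>?F" using in_component by fastforce
  qed
  moreover have "card (\<Union>?F) = (\<Sum>C\<in>?F. card C)"
  proof (rule card_Union_disjoint)
    show "pairwise disjnt ?F"
    proof (rule pairwiseI)
      fix C1 C2 assume "C1 \<in> ?F" "C2 \<in> ?F" "C1 \<noteq> C2"
      then show "disjnt C1 C2"
        using components_disjoint[OF assms(1) F_comp F_comp] by (simp add: disjnt_def)
    qed
    show "finite C" if "C \<in> ?F" for C
      using F_sub[OF that] \<open>C' \<subseteq> W\<close> assms(4) by (simp add: finite_subset)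
  qed
  moreover have "even (\<Sum>C\<in>?F. card C)"
  proof (rule dvd_sum)
    show "even (card C)" if "C \<in> ?F" for C
      using F_comp[OF that] F_sub[OF that] none by (auto simp: odd_components_def)
  qed
  ultimately show False using C'(2) by simp
qed

lemma card_odd_components_antimono:
  assumes "symp A" "symp A'" "\<And>u v. A u v \<Longrightarrow> A' u v" "finite W"
  shows "card (odd_components A' W) \<le> card (odd_components A W)"
proof -
  define g where "g C' = (SOME C. C \<in> odd_components A W \<and> C \<subseteq> C')" for C'
  have g: "g C' \<in> odd_components A W \<and> g C' \<subseteq> C'" if "C' \<in> odd_components A' W" for C'
  proof -
    have "\<exists>C. C \<in> odd_components A W \<and> C \<subseteq> C'"
      using odd_component_contains_odd_component[OF assms(1,2) _ assms(4) that] assms(3) by blast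
    then show ?thesis unfolding g_def by (rule someI_ex)
  qed
  have "inj_on g (odd_components A' W)"
  proof (rule inj_onI)
    fix C1 C2 assume C: "C1 \<in> odd_components A' W" "C2 \<in> odd_components A' W" and "g C1 = g C2"
    have "g C1 \<noteq> {}" using g[OF C(1)] components_nonempty by (auto simp: odd_components_def)
    then have "C1 \<inter> C2 \<noteq> {}" using g[OF C(1)] g[OF C(2)] \<open>g C1 = g C2\<close> by blast
    then show "C1 = C2"
      using C components_disjoint[OF assms(2)] by (auto simp: odd_components_def)
  qed
  moreover have "g ` odd_components A' W \<subseteq> odd_components A W" using g by blast
  ultimately show ?thesis
    using card_inj_on_le finite_odd_components[OF assms(4)] by blast
qed

lemma tutte_condition_mono:
  assumes "symp A" "symp A'" "\<And>u v. A u v \<Longrightarrow> A' u v" "finite V" "tutte_condition A V"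
  shows "tutte_condition A' V"
  unfolding tutte_condition_def
proof (intro allI impI)
  fix S assume "S \<subseteq> V"
  have "card (odd_components A' (V - S)) \<le> card (odd_components A (V - S))"
    using card_odd_components_antimono[OF assms(1-3)] assms(4) by simp
  also have "\<dots> \<le> card S" using assms(5) \<open>S \<subseteq> V\<close> by (simp add: tutte_condition_def)
  finally show "card (odd_components A' (V - S)) \<le> card S" .
qed

lemma perfect_pairing_Un:
  assumes "perfect_pairing A B p" "perfect_pairing A B' p'" "B \<inter> B' = {}"
  shows "perfect_pairing A (B \<union> B') (\<lambda>v. if v \<in> B then p v else p' v)"
  using assms unfolding perfect_pairing_def disjoint_iff by (simp split: if_split) blast

lemma perfect_pairing_UN:
  assumes "finite I" "\<And>i j. i \<in> I \<Longrightarrow> j \<in> I \<Longrightarrow> i \<noteq> j \<Longrightarrow> B i \<inter> B j = {}"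
    "\<And>i. i \<in> I \<Longrightarrow> \<exists>p. perfect_pairing A (B i) p"
  shows "\<exists>p. perfect_pairing A (\<Union>i\<in>I. B i) p"
  using assms
proof (induction I rule: finite_induct)
  case empty
  then show ?case by (simp add: perfect_pairing_def)
next
  case (insert i I)
  obtain p where "perfect_pairing A (B i) p" using insert.prems by blast
  moreover obtain p' where "perfect_pairing A (\<Union>j\<in>I. B j) p'" using insert by (metis insertCI)
  moreover have "B i \<inter> (\<Union>j\<in>I. B j) = {}" using insert by blast
  ultimately have "perfect_pairing A (B i \<union> (\<Union>j\<in>I. B j)) (\<lambda>v. if v \<in> B i then p v else p' v)"
    by (rule perfect_pairing_Un)
  then show ?case by auto
qed

lemma perfect_pairing_even_clique:
  assumes "finite B" "even (card B)" "\<And>x y. x \<in> B \<Longrightarrow> y \<in> B \<Longrightarrow> x \<noteq> y \<Longrightarrow> A x y"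
  shows "\<exists>p. perfect_pairing A B p"
  using assms
proof (induction "card B" arbitrary: B rule: less_induct)
  case less
  show ?case
  proof (cases "B = {}")
    case True
    then show ?thesis by (auto simp: perfect_pairing_def)
  next
    case False
    then obtain x where x: "x \<in> B" by blast
    then have "odd (card (B - {x}))" using less.prems(1,2) by (auto simp: card_gt_0_iff)
    then have "B - {x} \<noteq> {}" by (metis card.empty even_zero)
    then obtain y where "y \<in> B - {x}" by blast
    then have xy: "x \<in> B" "y \<in> B" "x \<noteq> y" using x by auto
    have "card B \<ge> 2" using xy less.prems(1)
      by (metis card_2_iff card_mono empty_subsetI insert_subset)
    then have "card (B - {x, y}) < card B" "even (card (B - {x, y}))"
      using xy less.prems(1,2) by (auto simp: card_Diff_subset)
    then obtain p where "perfect_pairing A (B - {x, y}) p"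
      using less by (metis Diff_iff finite_Diff)
    moreover have "perfect_pairing A {x, y} (\<lambda>v. if v = x then y else x)"
      using xy less.prems(3) by (auto simp: perfect_pairing_def)
    moreover have "B = {x, y} \<union> (B - {x, y})" using xy by blast
    ultimately show ?thesis using perfect_pairing_Un[of A "{x, y}" _ "B - {x, y}"]
      by (metis Diff_disjoint)
  qed
qed

lemma perfect_pairing_add_edge_unused:
  assumes "perfect_pairing (add_edge A x y) V p" "p x \<noteq> y" "x \<in> V" "y \<in> V"
  shows "perfect_pairing A V p"
  using assms unfolding perfect_pairing_def add_edge_def by (metis (full_types))

lemma perfect_pairing_restrict:
  assumes "perfect_pairing (add_edge A x y) V p" "X \<subseteq> V" "p ` X \<subseteq> X" "x \<notin> X"
  shows "perfect_pairing A X p"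
  unfolding perfect_pairing_def
proof
  fix v assume v: "v \<in> X"
  then have "p v \<noteq> v \<and> p (p v) = v \<and> add_edge A x y v (p v)"
    using assms(1,2) by (auto simp: perfect_pairing_def)
  moreover have "p v \<in> X" using assms(3) v by blast
  moreover have "v \<noteq> x" "p v \<noteq> x" using assms(4) v \<open>p v \<in> X\<close> by auto
  ultimately show "p v \<in> X \<and> p v \<noteq> v \<and> p (p v) = v \<and> A v (p v)" by (auto simp: add_edge_def)
qed

lemma perfect_pairing_image_Diff:
  assumes "perfect_pairing A V p" "p ` X \<subseteq> X"
  shows "p ` (V - X) \<subseteq> V - X"
proof
  fix w assume "w \<in> p ` (V - X)"
  then obtain v where v: "v \<in> V" "v \<notin> X" "w = p v" by blast
  then have "w \<in> V" "p w = v" using assms(1) by (auto simp: perfect_pairing_def)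
  moreover have "w \<notin> X" using assms(2) v(2) \<open>p w = v\<close> by blast
  ultimately show "w \<in> V - X" by simp
qed

fun alt_walk :: "('a \<Rightarrow> 'a) \<Rightarrow> ('a \<Rightarrow> 'a) \<Rightarrow> 'a \<Rightarrow> nat \<Rightarrow> 'a" where
  "alt_walk p q d 0 = d"
| "alt_walk p q d (Suc n) = (if even n then p (alt_walk p q d n) else q (alt_walk p q d n))"

declare alt_walk.simps(2)[simp del]

text \<open>The switching step of Lovasz' proof of Tutte's theorem: \<open>a b c\<close> is a path and \<open>d\<close> a
  non-neighbour of \<open>b\<close>; \<open>p1\<close> and \<open>p2\<close> are perfect matchings that use the added edges
  \<open>ac\<close> and \<open>bd\<close>. Following \<open>p1\<close> and \<open>p2\<close> alternately from \<open>d\<close> until \<open>b\<close>, \<open>a\<close> or \<open>c\<close>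
  is reached, and switching between them along that walk, yields a perfect matching
  avoiding both added edges.\<close>

locale tutte_switching =
  fixes V :: "'a set" and A :: "'a \<Rightarrow> 'a \<Rightarrow> bool" and a b c d :: 'a and p1 p2 :: "'a \<Rightarrow> 'a"
  assumes finite_V: "finite V" and symp_A: "symp A"
    and in_V: "a \<in> V" "b \<in> V" "c \<in> V" "d \<in> V"
    and adj_ab: "A a b" and adj_bc: "A b c" and not_adj_bd: "\<not> A b d"
    and distinct: "a \<noteq> b" "b \<noteq> c" "d \<noteq> b"
    and p1: "perfect_pairing (add_edge A a c) V p1" "p1 a = c"
    and p2: "perfect_pairing (add_edge A b d) V p2" "p2 b = d"
begin

abbreviation u :: "nat \<Rightarrow> 'a" where
  "u \<equiv> alt_walk p1 p2 d"

definition step :: "nat \<Rightarrow> 'a \<Rightarrow> 'a" where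
  "step n = (if even n then p1 else p2)"

definition hits :: "nat \<Rightarrow> bool" where
  "hits n \<longleftrightarrow> (odd n \<and> u n = b) \<or> (even n \<and> u n \<in> {a, c})"

definition T :: nat where
  "T = (LEAST n. hits n)"

lemma p1_involution: "v \<in> V \<Longrightarrow> p1 v \<in> V \<and> p1 v \<noteq> v \<and> p1 (p1 v) = v"
  using p1(1) by (simp add: perfect_pairing_def)

lemma p2_involution: "v \<in> V \<Longrightarrow> p2 v \<in> V \<and> p2 v \<noteq> v \<and> p2 (p2 v) = v"
  using p2(1) by (simp add: perfect_pairing_def)

lemma p1_c: "p1 c = a"
  using p1_involution[OF in_V(1)] p1(2) by simp

lemma p2_d: "p2 d = b"
  using p2_involution[OF in_V(2)] p2(2) by simp

lemma step_involution: "v \<in> V \<Longrightarrow> step n v \<in> V \<and> step n v \<noteq> v \<and> step n (step n v) = v"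
  using p1_involution p2_involution by (simp add: step_def)

lemma walk_Suc: "u (Suc n) = step n (u n)"
  by (simp add: step_def alt_walk.simps)

lemma walk_in_V: "u n \<in> V"
  by (induction n) (use in_V step_involution in \<open>auto simp: walk_Suc\<close>)

lemma step_walk_Suc: "step n (u (Suc n)) = u n"
  using step_involution[OF walk_in_V[of n], of n] by (simp only: walk_Suc)

lemma p1_walk: "p1 (u n) = (if even n then u (Suc n) else u (n - 1))"
  using p1_involution[OF walk_in_V[of "n - 1"]] by (cases n) (auto simp: alt_walk.simps)

lemma p2_walk: "p2 (u n) = (if odd n then u (Suc n) else if n = 0 then b else u (n - 1))"
  using p2_involution[OF walk_in_V[of "n - 1"]] p2_d by (cases n) (auto simp: alt_walk.simps)

text \<open>Since \<open>p1\<close> and \<open>p2\<close> are involutions, the first repeated vertex of the walk can only be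
  its start \<open>d\<close>, entered from \<open>p2 d = b\<close>.\<close>

lemma walk_repeat_earlier:
  assumes "i < Suc m" "u i = u (Suc m)"
  shows "hits m \<or> (\<exists>i'<m. u i' = u m)"
proof (cases i)
  case 0
  show ?thesis
  proof (cases "even m")
    case True
    then have "u m = p1 d"
      using assms(2) 0 p1_involution[OF walk_in_V[of m]] by (simp add: alt_walk.simps)
    moreover have "m \<noteq> 0"
    proof
      assume "m = 0"
      then show False using \<open>u m = p1 d\<close> p1_involution[OF in_V(4)] by simp
    qed
    moreover have "m \<noteq> 1" using \<open>even m\<close> by auto
    ultimately have "1 < m" "u 1 = u m" by (simp_all add: alt_walk.simps)
    then show ?thesis by blast
  next
    case False
    then have "u m = b"
      using assms(2) 0 p2_involution[OF walk_in_V[of m]] p2_d by (auto simp: alt_walk.simps)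
    then show ?thesis using False by (simp add: hits_def)
  qed
next
  case (Suc l)
  show ?thesis
  proof (cases "even l = even m")
    case True
    have "u l = step m (u (Suc m))" using step_walk_Suc[of l] Suc assms(2) True
      by (simp add: step_def)
    then show ?thesis using step_walk_Suc[of m] Suc assms(1) by auto
  next
    case False
    have "u (Suc i) = step m (u (Suc m))" using walk_Suc[of i] Suc assms(2) False
      by (simp add: step_def)
    then have eq: "u (Suc i) = u m" using step_walk_Suc[of m] by simp
    have "Suc i \<noteq> m" using False Suc by auto
    moreover have "i \<noteq> m"
    proof
      assume "i = m"
      then have "step i (u i) = u i" using eq walk_Suc[of i] by simp
      then show False using step_involution[OF walk_in_V[of i], of i] by simp
    qed
    ultimately show ?thesis using eq assms(1) by auto
  qed
qed

lemma walk_repeat_imp_hits: "i < j \<Longrightarrow> u i = u j \<Longrightarrow> \<exists>k<j. hits k"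
proof (induction j arbitrary: i rule: less_induct)
  case (less j)
  then obtain m where j: "j = Suc m" by (cases j) auto
  then have "hits m \<or> (\<exists>i'<m. u i' = u m)" using walk_repeat_earlier less.prems by blast
  then show ?case
  proof
    assume "hits m"
    then show ?thesis using j by blast
  next
    assume "\<exists>i'<m. u i' = u m"
    then obtain k where "k < m" "hits k" using less.IH[of m] j by blast
    then show ?thesis using j less_SucI by blast
  qed
qed

lemma hits_exists: "\<exists>k. hits k"
proof -
  have "range u \<subseteq> V" using walk_in_V by blast
  then have "\<not> inj u" using finite_V infinite_UNIV_nat by (meson finite_imageD finite_subset)
  then obtain i j where "i \<noteq> j" "u i = u j" unfolding inj_def by blast
  then have "\<exists>i j. i < j \<and> u i = u j" by (metis linorder_neqE_nat)
  then show ?thesis using walk_repeat_imp_hits by blast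
qed

lemma hits_T: "hits T"
  unfolding T_def using hits_exists by (rule LeastI_ex)

lemma not_hits_before_T: "k < T \<Longrightarrow> \<not> hits k"
  unfolding T_def by (rule not_less_Least)

lemma walk_inj: "i < j \<Longrightarrow> j \<le> T \<Longrightarrow> u i \<noteq> u j"
proof
  assume "i < j" "j \<le> T" "u i = u j"
  then obtain k where "k < j" "hits k" using walk_repeat_imp_hits by blast
  then show False using not_hits_before_T \<open>j \<le> T\<close> by simp
qed

lemma walk_not_ac: "n < T \<Longrightarrow> u n \<notin> {a, c}"
proof
  assume n: "n < T" and ac: "u n \<in> {a, c}"
  show False
  proof (cases "even n")
    case True
    then show False using not_hits_before_T[OF n] ac by (simp add: hits_def)
  next
    case False
    then have "u (n - 1) \<in> {a, c}" using p1_walk[of n] ac p1(2) p1_c by auto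
    moreover have "n - 1 < T" "even (n - 1)" using n False by auto
    ultimately show False using not_hits_before_T[of "n - 1"] by (simp add: hits_def)
  qed
qed

lemma walk_closed_odd:
  assumes "odd T" "n \<le> T"
  shows "p1 (u n) \<in> u ` {..T}" "p2 (u n) \<in> u ` {..T}"
proof -
  have uT: "u T = b" using hits_T assms(1) by (simp add: hits_def)
  show "p1 (u n) \<in> u ` {..T}"
  proof (cases "even n")
    case True
    then have "Suc n \<le> T" using assms by (cases "n = T") auto
    then show ?thesis using True by (simp add: p1_walk)
  qed (use assms(2) in \<open>simp add: p1_walk\<close>)
  show "p2 (u n) \<in> u ` {..T}"
  proof (cases "even n")
    case True
    have "b \<in> u ` {..T}" using uT by (metis atMost_iff image_eqI order_refl)
    then show ?thesis using True assms(2) by (auto simp: p2_walk)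
  next
    case False
    show ?thesis
    proof (cases "n = T")
      case True
      then have "p2 (u n) = d" using uT p2(2) by simp
      then show ?thesis using rev_image_eqI[of 0 "{..T}" d u] by simp
    qed (use False assms(2) in \<open>simp add: p2_walk\<close>)
  qed
qed

lemma walk_closed_even:
  assumes "even T"
  shows "n < T \<Longrightarrow> p1 (u n) \<in> u ` {..<T}" "n \<le> T \<Longrightarrow> p2 (u n) \<in> insert b (u ` {..T})"
proof -
  show "p1 (u n) \<in> u ` {..<T}" if "n < T"
  proof (cases "even n")
    case True
    then have "Suc n < T" using that assms by (metis Suc_lessI even_Suc)
    then show ?thesis using True by (simp add: p1_walk)
  qed (use that in \<open>simp add: p1_walk\<close>)
  show "p2 (u n) \<in> insert b (u ` {..T})" if "n \<le> T"
  proof (cases "odd n")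
    case True
    then have "Suc n \<le> T" using that assms by (cases "n = T") auto
    then show ?thesis using True by (simp add: p2_walk)
  qed (use that in \<open>simp add: p2_walk\<close>)
qed

text \<open>If the walk returns to \<open>b\<close> at an odd step, the walk is closed under both \<open>p1\<close> and \<open>p2\<close>:
  use \<open>p1\<close> on it and \<open>p2\<close> elsewhere.\<close>

lemma switch_odd:
  assumes "odd T"
  shows "\<exists>p. perfect_pairing A V p"
proof -
  let ?Y = "u ` {..T}"
  have uT: "u T = b" using hits_T assms by (simp add: hits_def)
  have Y_V: "?Y \<subseteq> V" using walk_in_V by blast
  have "a \<notin> ?Y"
  proof
    assume "a \<in> ?Y"
    then obtain n where "n \<le> T" "u n = a" by auto
    then show False using walk_not_ac[of n] uT distinct(1) by (cases "n = T") auto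
  qed
  then have pY: "perfect_pairing A ?Y p1"
    using walk_closed_odd(1)[OF assms] by (intro perfect_pairing_restrict[OF p1(1) Y_V]) auto
  have "p2 ` (V - ?Y) \<subseteq> V - ?Y"
    using walk_closed_odd(2)[OF assms] by (intro perfect_pairing_image_Diff[OF p2(1)]) auto
  moreover have "b \<notin> V - ?Y" using uT by (metis Diff_iff atMost_iff image_eqI order_refl)
  ultimately have pZ: "perfect_pairing A (V - ?Y) p2"
    by (rule perfect_pairing_restrict[OF p2(1) Diff_subset])
  have "perfect_pairing A (?Y \<union> (V - ?Y)) (\<lambda>v. if v \<in> ?Y then p1 v else p2 v)"
    by (rule perfect_pairing_Un[OF pY pZ Diff_disjoint])
  moreover have "?Y \<union> (V - ?Y) = V" using Y_V by blast
  ultimately show ?thesis by auto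
qed

lemma b_notin_walk:
  assumes "even T"
  shows "b \<notin> u ` {..T}"
proof
  assume "b \<in> u ` {..T}"
  then obtain n where n: "n \<le> T" "u n = b" by auto
  show False
  proof (cases "even n")
    case False
    then have "n < T" using n(1) assms by (cases "n = T") auto
    then show False using not_hits_before_T[of n] False n(2) by (simp add: hits_def)
  next
    case True
    have "n \<noteq> 0" using n(2) distinct(3) by (cases "n = 0") auto
    then have "u (n - 1) = d" using p2_walk[of n] True n(2) p2(2) by simp
    moreover have "0 < n - 1" using True \<open>n \<noteq> 0\<close> by presburger
    moreover have "n - 1 \<le> T" using n(1) by simp
    ultimately show False using walk_inj[of 0 "n - 1"] by simp
  qed
qed

text \<open>If the walk ends in \<open>a\<close> or \<open>c\<close> at an even step, use \<open>p1\<close> on the walk before that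
  vertex, match the end with \<open>b\<close>, and use \<open>p2\<close> elsewhere.\<close>

lemma switch_even:
  assumes "even T"
  shows "\<exists>p. perfect_pairing A V p"
proof -
  let ?Y = "u ` {..<T}" and ?Z = "insert b (u ` {..T})"
  have b_Z: "b \<notin> u ` {..T}" using b_notin_walk[OF assms] .
  have "a \<notin> ?Y" using walk_not_ac by fastforce
  then have pY: "perfect_pairing A ?Y p1"
    using walk_closed_even(1)[OF assms]
    by (intro perfect_pairing_restrict[OF p1(1) image_subsetI[OF walk_in_V]]) auto
  have "p2 b \<in> ?Z" using p2(2) rev_image_eqI[of 0 "{..T}" d u] by simp
  then have "p2 ` ?Z \<subseteq> ?Z" using walk_closed_even(2)[OF assms] by auto
  then have "p2 ` (V - ?Z) \<subseteq> V - ?Z" by (rule perfect_pairing_image_Diff[OF p2(1)])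
  then have pZ: "perfect_pairing A (V - ?Z) p2"
    by (rule perfect_pairing_restrict[OF p2(1) Diff_subset]) simp
  have "u T \<in> {a, c}" using hits_T assms by (simp add: hits_def)
  then have "A (u T) b" "A b (u T)" using adj_ab adj_bc symp_A by (auto dest: sympD)
  moreover have "u T \<noteq> b" using b_Z by (metis atMost_iff image_eqI order_refl)
  ultimately have "perfect_pairing A {u T, b} (\<lambda>v. if v = u T then b else u T)"
    by (auto simp: perfect_pairing_def)
  moreover have "{u T, b} \<inter> (V - ?Z) = {}" by auto
  ultimately obtain q where q: "perfect_pairing A ({u T, b} \<union> (V - ?Z)) q"
    using perfect_pairing_Un[OF _ pZ] by blast
  have "?Y \<inter> ({u T, b} \<union> (V - ?Z)) = {}"
    using b_Z walk_inj[of _ T] by (auto simp: image_iff) (metis order_refl)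
  then have "perfect_pairing A (?Y \<union> ({u T, b} \<union> (V - ?Z))) (\<lambda>v. if v \<in> ?Y then p1 v else q v)"
    by (rule perfect_pairing_Un[OF pY q])
  moreover have "?Y \<union> ({u T, b} \<union> (V - ?Z)) = V"
    using walk_in_V in_V(2) by (auto simp: image_iff le_less)
  ultimately show ?thesis by auto
qed

theorem perfect_pairing_exists: "\<exists>p. perfect_pairing A V p"
  using switch_odd switch_even by blast

end

lemma component_induced_path:
  assumes "(induced_rel A W)\<^sup>*\<^sup>* x z" "x \<in> W" "x \<noteq> z" "\<not> A x z"
  shows "\<exists>a b c. a \<in> W \<and> b \<in> W \<and> c \<in> W \<and> A a b \<and> A b c \<and> \<not> A a c \<and> a \<noteq> c"
proof -
  have "z = x \<or> A x z \<or> (\<exists>a b c. a \<in> W \<and> b \<in> W \<and> c \<in> W \<and> A a b \<and> A b c \<and> \<not> A a c \<and> a \<noteq> c)"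
    using assms(1)
  proof (induction rule: rtranclp_induct)
    case base
    then show ?case by simp
  next
    case (step y z)
    then have yz: "y \<in> W" "z \<in> W" "A y z" by (auto simp: induced_rel_def)
    from step.IH show ?case
    proof (elim disjE)
      assume "y = x"
      then show ?thesis using yz by simp
    next
      assume "A x y"
      show ?thesis
      proof (cases "z = x \<or> A x z")
        case False
        then have "x \<in> W \<and> y \<in> W \<and> z \<in> W \<and> A x y \<and> A y z \<and> \<not> A x z \<and> x \<noteq> z"
          using yz assms(2) \<open>A x y\<close> by auto
        then show ?thesis by blast
      qed auto
    next
      assume "\<exists>a b c. a \<in> W \<and> b \<in> W \<and> c \<in> W \<and> A a b \<and> A b c \<and> \<not> A a c \<and> a \<noteq> c"
      then show ?thesis by (intro disjI2)
    qed
  qed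
  then show ?thesis using assms(3,4) by auto
qed

lemma even_card_if_tutte_condition:
  assumes "finite V" "symp A" "tutte_condition A V"
  shows "even (card V)"
proof -
  have "card (odd_components A (V - {})) \<le> card ({} :: 'a set)"
    using assms(3) unfolding tutte_condition_def by blast
  then have "card (odd_components A V) = 0" by simp
  then show ?thesis using even_card_iff_even_card_odd_components[OF assms(2,1)] by simp
qed

lemma perfect_pairing_complete_components:
  assumes symp: "symp A" and fin: "finite W"
    and complete: "\<And>C x y. C \<in> components A W \<Longrightarrow> x \<in> C \<Longrightarrow> y \<in> C \<Longrightarrow> x \<noteq> y \<Longrightarrow> A x y"
    and r: "inj_on r (odd_components A W)" "r ` odd_components A W \<inter> W = {}"
    and partner: "\<And>C x. C \<in> odd_components A W \<Longrightarrow> x \<in> C \<Longrightarrow> A x (r C) \<and> A (r C) x"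
  shows "\<exists>p. perfect_pairing A (W \<union> r ` odd_components A W) p"
proof -
  let ?OC = "odd_components A W"
  have comp_W: "C \<subseteq> W" "finite C" if "C \<in> components A W" for C
    using components_subset[OF that] fin by (auto intro: finite_subset)
  define P where "P C = (if C \<in> ?OC then insert (r C) C else C)" for C
  have "\<exists>p. perfect_pairing A (\<Union>C\<in>components A W. P C) p"
  proof (rule perfect_pairing_UN)
    show "finite (components A W)" using fin by (rule finite_components)
    show "P C \<inter> P C' = {}" if C: "C \<in> components A W" "C' \<in> components A W" "C \<noteq> C'" for C C'
    proof -
      have "C \<inter> C' = {}" by (rule components_disjoint[OF symp C])
      moreover have "r C \<noteq> r C'" if "C \<in> ?OC" "C' \<in> ?OC" using r(1) that C(3) by (meson inj_onD)
      moreover have "r D \<notin> C \<union> C'" if "D \<in> ?OC" for D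
        using r(2) that comp_W[OF C(1)] comp_W[OF C(2)] by blast
      ultimately show ?thesis by (auto simp: P_def)
    qed
    show "\<exists>p. perfect_pairing A (P C) p" if C: "C \<in> components A W" for C
    proof (rule perfect_pairing_even_clique)
      have rC: "r C \<notin> C" if "C \<in> ?OC" using that r(2) comp_W[OF C] by blast
      show "finite (P C)" using comp_W[OF C] by (simp add: P_def)
      show "even (card (P C))"
      proof (cases "C \<in> ?OC")
        case True
        then show ?thesis using rC comp_W[OF C] by (simp add: P_def odd_components_def)
      next
        case False
        then show ?thesis using C by (simp add: P_def odd_components_def)
      qed
      show "A x y" if "x \<in> P C" "y \<in> P C" "x \<noteq> y" for x y
        using that complete[OF C] partner by (auto simp: P_def split: if_splits)
    qed
  qed
  moreover have "(\<Union>C\<in>components A W. P C) = W \<union> r ` ?OC"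
  proof
    show "(\<Union>C\<in>components A W. P C) \<subseteq> W \<union> r ` ?OC" using comp_W by (auto simp: P_def)
    show "W \<union> r ` ?OC \<subseteq> (\<Union>C\<in>components A W. P C)"
      using Union_components[of A W] by (auto simp: P_def odd_components_def)
  qed
  ultimately show ?thesis by simp
qed

text \<open>The base case of the induction: if the components left after removing the vertices \<open>U\<close>
  adjacent to all others are complete, match each odd component to its own vertex of \<open>U\<close>,
  which the Tutte condition provides, and pair up the remaining vertices of \<open>U\<close> arbitrarily.\<close>

lemma perfect_pairing_if_components_complete:
  assumes fin: "finite V" and symp: "symp A" and tutte: "tutte_condition A V"
    and U_def: "U = {v\<in>V. \<forall>w\<in>V. w \<noteq> v \<longrightarrow> A v w}"
    and complete: "\<And>C x y. C \<in> components A (V - U) \<Longrightarrow> x \<in> C \<Longrightarrow> y \<in> C \<Longrightarrow> x \<noteq> y \<Longrightarrow> A x y"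
  shows "\<exists>p. perfect_pairing A V p"
proof -
  let ?W = "V - U" and ?OC = "odd_components A (V - U)"
  have U_V: "U \<subseteq> V" using U_def by blast
  have univ: "A u v" "A v u" if "u \<in> U" "v \<in> V" "u \<noteq> v" for u v
    using that symp by (auto simp: U_def dest: sympD)
  have "card ?OC \<le> card U" using tutte U_V by (simp add: tutte_condition_def)
  then obtain r where r: "inj_on r ?OC" "r ` ?OC \<subseteq> U"
    using card_le_inj finite_odd_components fin U_V by (metis finite_Diff finite_subset)
  have "\<exists>p. perfect_pairing A (?W \<union> r ` ?OC) p"
  proof (rule perfect_pairing_complete_components[OF symp _ complete r(1)])
    show "finite ?W" using fin by simp
    show "r ` ?OC \<inter> ?W = {}" using r(2) by blast
    show "A x (r C) \<and> A (r C) x" if "C \<in> ?OC" "x \<in> C" for C x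
    proof -
      have "x \<in> ?W" using that components_subset by (auto simp: odd_components_def)
      moreover have "r C \<in> U" using r(2) that(1) by blast
      ultimately show ?thesis using univ[of "r C" x] by auto
    qed
  qed
  moreover have "\<exists>p. perfect_pairing A (U - r ` ?OC) p"
  proof (rule perfect_pairing_even_clique)
    have "even (card ?W) \<longleftrightarrow> even (card ?OC)"
      using even_card_iff_even_card_odd_components symp fin by blast
    moreover have "card V = card U + card ?W"
      using U_V fin by (metis card_Diff_subset card_mono finite_subset le_add_diff_inverse)
    moreover have "card (U - r ` ?OC) = card U - card ?OC"
      using r fin U_V by (simp add: card_Diff_subset card_image finite_subset)
    ultimately show "even (card (U - r ` ?OC))"
      using even_card_if_tutte_condition[OF fin symp tutte] \<open>card ?OC \<le> card U\<close> by auto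
    show "finite (U - r ` ?OC)" using fin U_V finite_subset by blast
    show "A x y" if "x \<in> U - r ` ?OC" "y \<in> U - r ` ?OC" "x \<noteq> y" for x y
      using that univ U_V by blast
  qed
  moreover have "(?W \<union> r ` ?OC) \<inter> (U - r ` ?OC) = {}" by blast
  moreover have "(?W \<union> r ` ?OC) \<union> (U - r ` ?OC) = V" using r(2) U_V by blast
  ultimately show ?thesis using perfect_pairing_Un by (metis (no_types, lifting))
qed

lemma card_non_adjacent_add_edge_less:
  assumes "finite V" "x \<in> V" "y \<in> V" "\<not> A x y"
  shows "card {(u, v) \<in> V \<times> V. \<not> add_edge A x y u v} < card {(u, v) \<in> V \<times> V. \<not> A u v}"
proof (rule psubset_card_mono)
  show "finite {(u, v) \<in> V \<times> V. \<not> A u v}"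
    by (rule finite_subset[OF _ finite_cartesian_product[OF assms(1) assms(1)]]) auto
  show "{(u, v) \<in> V \<times> V. \<not> add_edge A x y u v} \<subset> {(u, v) \<in> V \<times> V. \<not> A u v}"
    using assms(2-4) by (auto simp: add_edge_def)
qed

lemma perfect_pairing_of_add_edge_pairings:
  assumes "finite V" "symp A" "a \<in> V" "b \<in> V" "c \<in> V" "d \<in> V"
    and "A a b" "A b c" "\<not> A a c" "a \<noteq> c" "\<not> A b d" "d \<noteq> b"
    and "\<exists>p. perfect_pairing (add_edge A a c) V p" "\<exists>p. perfect_pairing (add_edge A b d) V p"
  shows "\<exists>p. perfect_pairing A V p"
proof -
  obtain p1 p2 where p1: "perfect_pairing (add_edge A a c) V p1"
    and p2: "perfect_pairing (add_edge A b d) V p2"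
    using assms(13,14) by blast
  consider "p1 a \<noteq> c" | "p2 b \<noteq> d" | "p1 a = c" "p2 b = d" by blast
  then show ?thesis
  proof cases
    case 1
    then show ?thesis using perfect_pairing_add_edge_unused[OF p1] assms(3,5) by blast
  next
    case 2
    then show ?thesis using perfect_pairing_add_edge_unused[OF p2] assms(4,6) by blast
  next
    case 3
    have "a \<noteq> b" "b \<noteq> c" using assms(7-9) by auto
    then have "tutte_switching V A a b c d p1 p2"
      using assms(1-8,11,12) p1 p2 3 by unfold_locales auto
    then show ?thesis by (rule tutte_switching.perfect_pairing_exists)
  qed
qed

text \<open>Either the base case applies,
  or some component left after removing the universal vertices contains an induced path
  \<open>a b c\<close>, and \<open>b\<close> has a non-neighbour \<open>d\<close>; adding \<open>ac\<close> or \<open>bd\<close> preserves the Tutte condition.\<close>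

theorem tutte:
  assumes "finite V" "symp A" "tutte_condition A V"
  shows "\<exists>p. perfect_pairing A V p"
  using assms(2,3)
proof (induction "card {(u, v) \<in> V \<times> V. \<not> A u v}" arbitrary: A rule: less_induct)
  case less
  have IH: "\<exists>p. perfect_pairing (add_edge A x y) V p" if "x \<in> V" "y \<in> V" "\<not> A x y" for x y
  proof (rule less.hyps)
    show "card {(u, v) \<in> V \<times> V. \<not> add_edge A x y u v} < card {(u, v) \<in> V \<times> V. \<not> A u v}"
      using card_non_adjacent_add_edge_less[of V x y A] assms(1) that by blast
    show "symp (add_edge A x y)" using less.prems(1) by (rule symp_add_edge)
    show "tutte_condition (add_edge A x y) V"
      using tutte_condition_mono[OF less.prems(1) symp_add_edge[OF less.prems(1)] _ assms(1)
          less.prems(2)]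
      by (simp add: add_edge_def)
  qed
  define U where "U = {v\<in>V. \<forall>w\<in>V. w \<noteq> v \<longrightarrow> A v w}"
  show ?case
  proof (cases "\<forall>C\<in>components A (V - U). \<forall>x\<in>C. \<forall>y\<in>C. x \<noteq> y \<longrightarrow> A x y")
    case True
    then show ?thesis
      using perfect_pairing_if_components_complete[OF assms(1) less.prems U_def] by blast
  next
    case False
    then obtain C x z where C: "C \<in> components A (V - U)" "x \<in> C" "z \<in> C" "x \<noteq> z" "\<not> A x z"
      by blast
    have "(induced_rel A (V - U))\<^sup>*\<^sup>* x z" "x \<in> V - U"
      using components_eq_component[OF less.prems(1) C(1,2)] C(2,3) components_subset[OF C(1)]
      by (auto simp: component_def)
    then obtain a b c where abc: "a \<in> V - U" "b \<in> V - U" "c \<in> V - U"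
      "A a b" "A b c" "\<not> A a c" "a \<noteq> c"
      using component_induced_path[of A "V - U" x z] C(4,5) by blast
    then obtain d where d: "d \<in> V" "d \<noteq> b" "\<not> A b d" by (auto simp: U_def)
    show ?thesis
      using perfect_pairing_of_add_edge_pairings[OF assms(1) less.prems(1) _ _ _ d(1) abc(4-7)
          d(3,2)]
        IH abc d by blast
  qed
qed

section \<open>Perfect matchings of bridgeless cubic graphs\<close>

lemma mgraph_ends:
  assumes "mgraph G" "e \<in> edges G"
  shows "card (ends G e) = 2" "ends G e \<subseteq> verts G" "finite (ends G e)"
  using assms by (auto simp: mgraph_def intro: card_ge_0_finite)

lemma mgraph_finite: "mgraph G \<Longrightarrow> finite (verts G)" "mgraph G \<Longrightarrow> finite (edges G)"
  by (simp_all add: mgraph_def)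

lemma finite_perfect_matchings: "finite (edges G) \<Longrightarrow> finite {M. perfect_matching G M \<and> Q M}"
  by (rule finite_subset[of _ "Pow (edges G)"]) (auto simp: perfect_matching_def)

abbreviation num_pm :: "('v,'e) mgraph \<Rightarrow> ('e set \<Rightarrow> bool) \<Rightarrow> nat" where
  "num_pm G P \<equiv> card {M. perfect_matching G M \<and> P M}"

lemma perfect_matching_iff_ex1:
  "perfect_matching G M \<longleftrightarrow> M \<subseteq> edges G \<and> (\<forall>v\<in>verts G. \<exists>!e. e \<in> M \<and> v \<in> ends G e)"
  unfolding perfect_matching_def by (simp only: card_Collect_eq_1_iff)

lemma perfect_matching_unique_at:
  assumes "perfect_matching G M" "v \<in> verts G" "e \<in> M" "e' \<in> M" "v \<in> ends G e" "v \<in> ends G e'"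
  shows "e = e'"
  using assms unfolding perfect_matching_iff_ex1 by blast

definition cut_edges :: "('v,'e) mgraph \<Rightarrow> 'v set \<Rightarrow> 'e set" where
  "cut_edges G C = {e\<in>edges G. card (ends G e \<inter> C) = 1}"

lemma cut_edge_ends:
  assumes "mgraph G" "e \<in> cut_edges G C"
  obtains s t where "ends G e = {s, t}" "s \<in> C" "t \<notin> C"
proof -
  have e: "e \<in> edges G" "card (ends G e \<inter> C) = 1" using assms(2) by (auto simp: cut_edges_def)
  then obtain s where s: "ends G e \<inter> C = {s}" by (auto simp: card_1_singleton_iff)
  have "s \<in> ends G e" using s by blast
  then have "card (ends G e - {s}) = 1" using mgraph_ends[OF assms(1) e(1)] by simp
  then obtain t where "ends G e - {s} = {t}" by (auto simp: card_1_singleton_iff)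
  then have "ends G e = {s, t}" "t \<notin> C" using s by auto
  then show ?thesis using that s by blast
qed

text \<open>Counting the incidences between the vertices of \<open>C\<close> and the edges of \<open>F\<close> in two ways: an
  edge contributes an odd number exactly if it crosses the cut.\<close>

lemma even_card_cut_edges_iff:
  assumes "mgraph G" "F \<subseteq> edges G" "C \<subseteq> verts G"
  shows "even (card (F \<inter> cut_edges G C)) \<longleftrightarrow> even (\<Sum>v\<in>C. card {e\<in>F. v \<in> ends G e})"
proof -
  have fin: "finite C" "finite F"
    using assms mgraph_finite[OF assms(1)] by (auto intro: finite_subset)
  have "odd (card (ends G e \<inter> C)) \<longleftrightarrow> e \<in> cut_edges G C" if "e \<in> F" for e
  proof -
    have "card (ends G e \<inter> C) \<le> 2"
      using mgraph_ends[OF assms(1)] that assms(2) by (metis card_mono inf_le1 subsetD)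
    then show ?thesis using that assms(2) by (auto simp: cut_edges_def) presburger+
  qed
  then have "{e\<in>F. odd (card (ends G e \<inter> C))} = F \<inter> cut_edges G C" by blast
  then show ?thesis
    using incidence_double_counting[OF fin, of "ends G"]
      even_sum_iff[OF fin(2), of "\<lambda>e. card (ends G e \<inter> C)"]
    by simp
qed

lemma sum_degree_cubic:
  "cubic G \<Longrightarrow> C \<subseteq> verts G \<Longrightarrow> (\<Sum>v\<in>C. card {e\<in>edges G. v \<in> ends G e}) = 3 * card C"
  by (simp add: cubic_def degree_def subset_iff)

lemma cubic_even_card_verts:
  assumes "cubic G"
  shows "even (card (verts G))"
proof -
  have mg: "mgraph G" using assms by (simp add: cubic_def)
  have "cut_edges G (verts G) = {}"
    using mgraph_ends[OF mg] by (auto simp: cut_edges_def Int_absorb2)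
  then show ?thesis
    using even_card_cut_edges_iff[OF mg order_refl order_refl] sum_degree_cubic[OF assms order_refl]
      by simp
qed

lemma cubic_odd_card_cut_edges:
  assumes "cubic G" "C \<subseteq> verts G" "odd (card C)"
  shows "odd (card (cut_edges G C))"
proof -
  have mg: "mgraph G" using assms by (simp add: cubic_def)
  have "cut_edges G C \<subseteq> edges G" by (auto simp: cut_edges_def)
  then show ?thesis
    using even_card_cut_edges_iff[OF mg order_refl assms(2)] sum_degree_cubic[OF assms(1,2)]
      assms(3)
    by (simp add: Int_absorb1)
qed

lemma perfect_matching_even_card_cut_edges_iff:
  assumes "mgraph G" "perfect_matching G M" "C \<subseteq> verts G"
  shows "even (card (M \<inter> cut_edges G C)) \<longleftrightarrow> even (card C)"
  using even_card_cut_edges_iff[OF assms(1) _ assms(3), of M] assms(2,3)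
  by (auto simp: perfect_matching_def subset_iff)

text \<open>A path that avoids the only edge of a cut stays on one side of it, so that edge is a bridge.\<close>

lemma bridgeless_cut_edges_not_singleton:
  assumes "mgraph G" "bridgeless G" "C \<subseteq> verts G"
  shows "cut_edges G C \<noteq> {f}"
proof
  assume cut: "cut_edges G C = {f}"
  then obtain s t where st: "ends G f = {s, t}" "s \<in> C" "t \<notin> C"
    using cut_edge_ends[OF assms(1)] by blast
  have "z \<in> C" if "(adj_in G (edges G - {f}))\<^sup>*\<^sup>* s z" for z
    using that
  proof (induction rule: rtranclp_induct)
    case base
    then show ?case using st(2) .
  next
    case (step y z)
    then obtain e where e: "e \<in> edges G - {f}" "ends G e = {y, z}" "y \<noteq> z"
      by (auto simp: adj_in_def)
    show ?case
    proof (rule ccontr)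
      assume "z \<notin> C"
      then have "ends G e \<inter> C = {y}" using e(2) step.IH by auto
      then have "e \<in> cut_edges G C" using e(1) by (simp add: cut_edges_def)
      then show False using cut e(1) by auto
    qed
  qed
  then have "is_bridge G f" using cut st by (auto simp: is_bridge_def cut_edges_def)
  then show False using assms(2) cut by (auto simp: bridgeless_def cut_edges_def)
qed

lemma cubic_bridgeless_card_cut_edges_ge_3:
  assumes "cubic G" "bridgeless G" "C \<subseteq> verts G" "odd (card C)"
  shows "3 \<le> card (cut_edges G C)"
proof -
  have mg: "mgraph G" using assms by (simp add: cubic_def)
  have "odd (card (cut_edges G C))" using cubic_odd_card_cut_edges[OF assms(1,3,4)] .
  moreover have "card (cut_edges G C) \<noteq> 1"
    using bridgeless_cut_edges_not_singleton[OF mg assms(2,3)] by (auto simp: card_1_singleton_iff)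
  ultimately show ?thesis by presburger
qed

lemma symp_adj_in: "symp (adj_in G F)"
  by (auto simp: symp_def adj_in_def insert_commute)

lemma component_cut_edges_subset:
  assumes "mgraph G" "C \<in> components (adj_in G (edges G - X)) (verts G - S)"
  shows "cut_edges G C \<subseteq> {e\<in>edges G. ends G e \<inter> S \<noteq> {}} \<union> X"
proof
  fix f assume f: "f \<in> cut_edges G C"
  then obtain s t where st: "ends G f = {s, t}" "s \<in> C" "t \<notin> C"
    using cut_edge_ends[OF assms(1)] by blast
  have fE: "f \<in> edges G" using f by (simp add: cut_edges_def)
  show "f \<in> {e\<in>edges G. ends G e \<inter> S \<noteq> {}} \<union> X"
  proof (rule ccontr)
    assume "f \<notin> {e\<in>edges G. ends G e \<inter> S \<noteq> {}} \<union> X"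
    then have t: "t \<in> verts G - S" and "f \<notin> X"
      using fE st(1) mgraph_ends(2)[OF assms(1) fE] by auto
    moreover have "s \<noteq> t" using st by blast
    ultimately have "adj_in G (edges G - X) s t" using fE st(1) by (auto simp: adj_in_def)
    then have "t \<in> C" by (rule components_closed[OF symp_adj_in assms(2) st(2) t])
    then show False using st(3) by simp
  qed
qed

lemma card_odd_components_crossed_le:
  assumes "mgraph G" "e \<in> edges G" "symp A"
  shows "card {C\<in>odd_components A W. e \<in> cut_edges G C} \<le> card (ends G e \<inter> W)"
proof -
  let ?K = "{C\<in>odd_components A W. e \<in> cut_edges G C}"
  define g where "g C = (SOME v. v \<in> ends G e \<inter> C)" for C
  have K: "C \<in> components A W" "ends G e \<inter> C \<noteq> {}" if "C \<in> ?K" for C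
    using that by (auto simp: odd_components_def cut_edges_def)
  have g: "g C \<in> ends G e \<inter> C" if "C \<in> ?K" for C
    using K(2)[OF that] unfolding g_def by (metis ex_in_conv someI_ex)
  have "inj_on g ?K"
  proof (rule inj_onI)
    fix C C' assume C: "C \<in> ?K" "C' \<in> ?K" and "g C = g C'"
    then have "C \<inter> C' \<noteq> {}" using g[OF C(1)] g[OF C(2)] by auto
    then show "C = C'" using components_disjoint[OF assms(3) K(1)[OF C(1)] K(1)[OF C(2)]] by blast
  qed
  moreover have "g ` ?K \<subseteq> ends G e \<inter> W" using g K(1) components_subset by blast
  moreover have "finite (ends G e \<inter> W)" by (simp add: mgraph_ends(3)[OF assms(1,2)])
  ultimately show ?thesis by (rule card_inj_on_le)
qed

lemma card_ends_outside_le_1: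
  assumes "mgraph G" "e \<in> edges G" "ends G e \<inter> S \<noteq> {}"
  shows "card (ends G e \<inter> (V - S)) \<le> 1"
proof -
  obtain s where s: "s \<in> ends G e" "s \<in> S" using assms(3) by blast
  then have "card (ends G e \<inter> (V - S)) \<le> card (ends G e - {s})"
    using mgraph_ends(3)[OF assms(1,2)] by (intro card_mono) auto
  then show ?thesis using mgraph_ends(1,3)[OF assms(1,2)] s(1) by simp
qed

lemma sum_card_cut_edges_eq:
  assumes "finite \<C>" "finite F" "\<And>C. C \<in> \<C> \<Longrightarrow> cut_edges G C \<subseteq> F"
  shows "(\<Sum>C\<in>\<C>. card (cut_edges G C)) = (\<Sum>e\<in>F. card {C\<in>\<C>. e \<in> cut_edges G C})"
proof -
  have "{e\<in>F. C \<in> {C. e \<in> cut_edges G C}} = cut_edges G C" if "C \<in> \<C>" for C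
    using assms(3)[OF that] by blast
  then show ?thesis
    using incidence_double_counting[OF assms(1,2), of "\<lambda>e. {C. e \<in> cut_edges G C}"]
    by (simp add: Int_commute Int_def conj_commute)
qed

lemma cubic_card_edges_meeting_le:
  assumes "cubic G" "S \<subseteq> verts G"
  shows "card {e\<in>edges G. ends G e \<inter> S \<noteq> {}} \<le> 3 * card S"
proof -
  have "finite S"
    using finite_subset[OF assms(2) mgraph_finite(1)] assms(1) by (simp add: cubic_def)
  have "{e\<in>edges G. ends G e \<inter> S \<noteq> {}} = (\<Union>v\<in>S. {e\<in>edges G. v \<in> ends G e})" by auto
  then have "card {e\<in>edges G. ends G e \<inter> S \<noteq> {}} \<le> (\<Sum>v\<in>S. card {e\<in>edges G. v \<in> ends G e})"
    using card_UN_le[OF \<open>finite S\<close>] by simp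
  also have "\<dots> = 3 * card S" by (rule sum_degree_cubic[OF assms])
  finally show ?thesis .
qed

text \<open>Each odd component sends at least three edges across its cut, all of which meet \<open>S\<close> or lie
  in \<open>X\<close>; an edge meeting \<open>S\<close> can enter only one component.\<close>

lemma cubic_bridgeless_card_odd_components_le:
  assumes "cubic G" "bridgeless G" "X \<subseteq> edges G" "S \<subseteq> verts G"
  shows "3 * card (odd_components (adj_in G (edges G - X)) (verts G - S)) \<le> 3 * card S + 2 * card X"
proof -
  let ?OC = "odd_components (adj_in G (edges G - X)) (verts G - S)"
  let ?ES = "{e\<in>edges G. ends G e \<inter> S \<noteq> {}}"
  let ?cross = "\<lambda>e. card {C\<in>?OC. e \<in> cut_edges G C}"
  have mg: "mgraph G" using assms(1) by (simp add: cubic_def)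
  have fin: "finite ?OC" "finite ?ES" "finite X"
    using mgraph_finite[OF mg] assms(3) by (auto simp: finite_odd_components intro: finite_subset)
  have OC: "C \<in> components (adj_in G (edges G - X)) (verts G - S)" "C \<subseteq> verts G" "odd (card C)"
    if "C \<in> ?OC" for C
    using that components_subset by (fastforce simp: odd_components_def)+
  have cross: "?cross e \<le> card (ends G e \<inter> (verts G - S))" if "e \<in> edges G" for e
    by (rule card_odd_components_crossed_le[OF mg that symp_adj_in])
  have "card ?OC * 3 \<le> (\<Sum>C\<in>?OC. card (cut_edges G C))"
    using sum_bounded_below[of ?OC 3 "\<lambda>C. card (cut_edges G C)"]
      cubic_bridgeless_card_cut_edges_ge_3[OF assms(1,2) OC(2,3)] by simp
  also have "\<dots> = (\<Sum>e\<in>?ES \<union> X. ?cross e)"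
    using component_cut_edges_subset[OF mg OC(1)] fin by (intro sum_card_cut_edges_eq) auto
  also have "\<dots> \<le> (\<Sum>e\<in>?ES. ?cross e) + (\<Sum>e\<in>X. ?cross e)"
    using sum_Un_nat[OF fin(2,3), of ?cross] by simp
  also have "\<dots> \<le> (\<Sum>e\<in>?ES. 1) + (\<Sum>e\<in>X. 2)"
  proof (rule add_mono; rule sum_mono)
    show "?cross e \<le> 1" if "e \<in> ?ES" for e
    proof -
      have e: "e \<in> edges G" "ends G e \<inter> S \<noteq> {}" using that by auto
      show ?thesis using le_trans[OF cross[OF e(1)] card_ends_outside_le_1[OF mg e]] .
    qed
    show "?cross e \<le> 2" if "e \<in> X" for e
    proof -
      have e: "e \<in> edges G" using that assms(3) by blast
      have "card (ends G e \<inter> (verts G - S)) \<le> card (ends G e)"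
        using mgraph_ends(3)[OF mg e] by (intro card_mono) auto
      then show ?thesis using cross[OF e] mgraph_ends(1)[OF mg e] by simp
    qed
  qed
  also have "\<dots> \<le> 3 * card S + 2 * card X"
    using cubic_card_edges_meeting_le[OF assms(1,4)] by simp
  finally show ?thesis by simp
qed

lemma cubic_bridgeless_tutte_condition:
  assumes "cubic G" "bridgeless G" "X \<subseteq> edges G" "card X \<le> 2"
  shows "tutte_condition (adj_in G (edges G - X)) (verts G)"
  unfolding tutte_condition_def
proof (intro allI impI)
  fix S assume S: "S \<subseteq> verts G"
  let ?OC = "odd_components (adj_in G (edges G - X)) (verts G - S)"
  have fin: "finite (verts G)" using assms(1) by (simp add: cubic_def mgraph_def)
  then have "card S \<le> card (verts G)" "card (verts G - S) = card (verts G) - card S"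
    using S by (simp_all add: card_mono card_Diff_subset finite_subset)
  moreover have "even (card (verts G - S)) \<longleftrightarrow> even (card ?OC)"
    using even_card_iff_even_card_odd_components[OF symp_adj_in finite_Diff[OF fin]] .
  ultimately have "even (card ?OC) \<longleftrightarrow> even (card S)"
    using cubic_even_card_verts[OF assms(1)] by auto
  moreover have "card ?OC \<le> card S + 1"
    using cubic_bridgeless_card_odd_components_le[OF assms(1-3) S] assms(4) by simp
  ultimately show "card ?OC \<le> card S" by (metis add.commute le_SucE odd_add odd_one plus_1_eq_Suc)
qed

lemma perfect_matching_of_perfect_pairing:
  assumes "perfect_pairing (adj_in G F) (verts G) p"
  shows "\<exists>M\<subseteq>F. perfect_matching G M"
proof -
  define edge where "edge V = (SOME e. e \<in> F \<and> e \<in> edges G \<and> ends G e = V)" for V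
  have pair: "p v \<in> verts G" "p (p v) = v" "adj_in G F v (p v)" if "v \<in> verts G" for v
    using assms that by (auto simp: perfect_pairing_def)
  have edge: "edge {v, p v} \<in> F \<and> edge {v, p v} \<in> edges G \<and> ends G (edge {v, p v}) = {v, p v}"
    if "v \<in> verts G" for v
  proof -
    have "\<exists>e. e \<in> F \<and> e \<in> edges G \<and> ends G e = {v, p v}"
      using pair(3)[OF that] by (auto simp: adj_in_def)
    then show ?thesis unfolding edge_def by (rule someI_ex)
  qed
  let ?M = "(\<lambda>v. edge {v, p v}) ` verts G"
  have ex1: "\<exists>!e. e \<in> ?M \<and> v \<in> ends G e" if v: "v \<in> verts G" for v
  proof
    show "edge {v, p v} \<in> ?M \<and> v \<in> ends G (edge {v, p v})" using edge[OF v] v by blast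
  next
    fix e assume e: "e \<in> ?M \<and> v \<in> ends G e"
    then obtain w where w: "w \<in> verts G" "e = edge {w, p w}" by blast
    then have "v = w \<or> v = p w" using edge[OF w(1)] e by blast
    then have "{w, p w} = {v, p v}" using pair(2)[OF w(1)] by auto
    then show "e = edge {v, p v}" using w(2) by simp
  qed
  have "?M \<subseteq> F" using edge by blast
  moreover have "perfect_matching G ?M"
    unfolding perfect_matching_iff_ex1
  proof (intro conjI ballI)
    show "?M \<subseteq> edges G" using edge by blast
    show "\<exists>!e. e \<in> ?M \<and> v \<in> ends G e" if "v \<in> verts G" for v using ex1[OF that] .
  qed
  ultimately show ?thesis by blast
qed

lemma cubic_edges_at_vertex:
  assumes "cubic G" "e \<in> edges G"
  obtains u g h where "u \<in> ends G e" "u \<in> verts G"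
    "{f\<in>edges G. u \<in> ends G f} - {e} = {g, h}" "g \<noteq> h"
proof -
  have mg: "mgraph G" using assms(1) by (simp add: cubic_def)
  obtain u where u: "u \<in> ends G e" using mgraph_ends(1)[OF mg assms(2)] by (auto simp: card_2_iff)
  then have u_V: "u \<in> verts G" using mgraph_ends(2)[OF mg assms(2)] by blast
  have "card {f\<in>edges G. u \<in> ends G f} = 3" using assms(1) u_V by (simp add: cubic_def degree_def)
  then have "card ({f\<in>edges G. u \<in> ends G f} - {e}) = 2" using assms(2) u mgraph_finite(2)[OF mg]
    by simp
  then obtain g h where "{f\<in>edges G. u \<in> ends G f} - {e} = {g, h}" "g \<noteq> h"
    by (auto simp: card_2_iff)
  then show ?thesis using that u u_V by blast
qed

theorem cubic_bridgeless_edge_in_perfect_matching: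
  assumes "cubic G" "bridgeless G" "e \<in> edges G"
  shows "\<exists>M. perfect_matching G M \<and> e \<in> M"
proof -
  have mg: "mgraph G" using assms(1) by (simp add: cubic_def)
  obtain u g h where u: "u \<in> ends G e" "u \<in> verts G"
    and X: "{f\<in>edges G. u \<in> ends G f} - {e} = {g, h}" "g \<noteq> h"
    by (rule cubic_edges_at_vertex[OF assms(1,3)])
  have "{g, h} \<subseteq> edges G" "card {g, h} \<le> 2" using X by auto
  then have "tutte_condition (adj_in G (edges G - {g, h})) (verts G)"
    by (rule cubic_bridgeless_tutte_condition[OF assms(1,2)])
  then obtain p where "perfect_pairing (adj_in G (edges G - {g, h})) (verts G) p"
    using tutte[OF mgraph_finite(1)[OF mg] symp_adj_in] by blast
  then have "\<exists>M\<subseteq>edges G - {g, h}. perfect_matching G M"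
    by (rule perfect_matching_of_perfect_pairing)
  then obtain M where M: "M \<subseteq> edges G - {g, h}" "perfect_matching G M" by blast
  have "\<exists>!f. f \<in> M \<and> u \<in> ends G f" using M(2) u(2) by (simp add: perfect_matching_iff_ex1)
  then obtain f where "f \<in> M" "u \<in> ends G f" by blast
  moreover have "f \<in> edges G" "f \<notin> {g, h}" using M(1) \<open>f \<in> M\<close> by auto
  ultimately have "f = e" using X(1) by blast
  then show ?thesis using M(2) \<open>f \<in> M\<close> by blast
qed

lemma cubic_bridgeless_num_pm_containing:
  assumes "cubic G" "bridgeless G" "e \<in> edges G"
  shows "1 \<le> num_pm G (\<lambda>M. e \<in> M)"
proof -
  have "finite (edges G)" using assms(1) by (simp add: cubic_def mgraph_def)
  moreover obtain M where "perfect_matching G M" "e \<in> M"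
    using cubic_bridgeless_edge_in_perfect_matching[OF assms] by blast
  ultimately show ?thesis
    using finite_perfect_matchings[of G "\<lambda>M. e \<in> M"] by (auto simp: Suc_le_eq card_gt_0_iff)
qed

lemma cubic_bridgeless_num_pm_avoiding:
  assumes "cubic G" "bridgeless G" "e \<in> edges G"
  shows "2 \<le> num_pm G (\<lambda>M. e \<notin> M)"
proof -
  have mg: "mgraph G" using assms(1) by (simp add: cubic_def)
  obtain u g h where u: "u \<in> ends G e" "u \<in> verts G"
    and gh: "{f\<in>edges G. u \<in> ends G f} - {e} = {g, h}" "g \<noteq> h"
    by (rule cubic_edges_at_vertex[OF assms(1,3)])
  then have g: "g \<in> edges G" "u \<in> ends G g" "g \<noteq> e" and h: "h \<in> edges G" "u \<in> ends G h" "h \<noteq> e"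
    by blast+
  obtain Mg where Mg: "perfect_matching G Mg" "g \<in> Mg"
    using cubic_bridgeless_edge_in_perfect_matching[OF assms(1,2) g(1)] by blast
  obtain Mh where Mh: "perfect_matching G Mh" "h \<in> Mh"
    using cubic_bridgeless_edge_in_perfect_matching[OF assms(1,2) h(1)] by blast
  have "e \<notin> Mg" using perfect_matching_unique_at[OF Mg(1) u(2) _ Mg(2) u(1) g(2)] g(3) by blast
  moreover have "e \<notin> Mh" using perfect_matching_unique_at[OF Mh(1) u(2) _ Mh(2) u(1) h(2)] h(3)
    by blast
  ultimately have "{Mg, Mh} \<subseteq> {M. perfect_matching G M \<and> e \<notin> M}" using Mg Mh by auto
  from card_mono[OF finite_perfect_matchings[OF mgraph_finite(2)[OF mg]] this]
  moreover have "Mg \<noteq> Mh"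
    using perfect_matching_unique_at[OF Mg(1) u(2) _ Mg(2) h(2) g(2)] Mh(2) gh(2) by blast
  ultimately show ?thesis by simp
qed

section \<open>2-cut-connections\<close>

lemma card_pairs_iff:
  assumes "finite {x. P x}" "finite {y. Q y}"
  shows "card {(x, y). P x \<and> Q y \<and> (a x \<longleftrightarrow> b y)} =
    card {x. P x \<and> a x} * card {y. Q y \<and> b y} + card {x. P x \<and> \<not> a x} * card {y. Q y \<and> \<not> b y}"
proof -
  have "{(x, y). P x \<and> Q y \<and> (a x \<longleftrightarrow> b y)} =
    {x. P x \<and> a x} \<times> {y. Q y \<and> b y} \<union> {x. P x \<and> \<not> a x} \<times> {y. Q y \<and> \<not> b y}" by auto
  moreover have "finite ({x. P x \<and> a x} \<times> {y. Q y \<and> b y})"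
    "finite ({x. P x \<and> \<not> a x} \<times> {y. Q y \<and> \<not> b y})"
    using assms by (simp_all add: finite_cartesian_product)
  moreover have "({x. P x \<and> a x} \<times> {y. Q y \<and> b y}) \<inter> ({x. P x \<and> \<not> a x} \<times> {y. Q y \<and> \<not> b y}) = {}"
    by auto
  ultimately show ?thesis by (simp add: card_Un_disjoint card_cartesian_product)
qed

lemma num_pm_split:
  "finite (edges G) \<Longrightarrow> num_pm G P = num_pm G (\<lambda>M. P M \<and> Q M) + num_pm G (\<lambda>M. P M \<and> \<not> Q M)"
 
    by (subst card_Un_disjoint[symmetric])
      (auto intro: finite_perfect_matchings arg_cong[where f=card])

lemma card_Collect_conj_unique:
  assumes "\<And>x. P x \<longleftrightarrow> x = a"
  shows "card {x. P x \<and> Q x} = (if Q a then 1 else 0)"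
proof -
  have "{x. P x \<and> Q x} = (if Q a then {a} else {})" using assms by auto
  then show ?thesis by simp
qed

lemma nat_sum_weighted_eq_1:
  fixes a b c d :: nat
  assumes "1 \<le> a" "2 \<le> b" "c * a + d * b = 1"
  shows "c + d = 1"
proof -
  have "d = 0" using assms by (cases d) auto
  then show ?thesis using assms by simp
qed

lemma nat_sum_weighted_neq_1:
  fixes a b c d :: nat
  assumes "2 \<le> a" "2 \<le> b"
  shows "a * c + b * d \<noteq> 1"
  using assms by (cases c; cases d) auto

locale two_cut_connection =
  fixes G1 :: "('v1,'e1) mgraph" and G2 :: "('v2,'e2) mgraph"
    and f1 :: 'e1 and x1 y1 :: 'v1 and f2 :: 'e2 and x2 y2 :: 'v2
    and G :: "('v1 + 'v2, ('e1,'e2) cedge) mgraph"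
  assumes mgraph1: "mgraph G1" and mgraph2: "mgraph G2"
    and f1: "f1 \<in> edges G1" "ends G1 f1 = {x1, y1}"
    and f2: "f2 \<in> edges G2" "ends G2 f2 = {x2, y2}"
    and G_def: "G = cut_conn G1 f1 x1 y1 G2 f2 x2 y2"
begin

lemma x1_neq_y1: "x1 \<noteq> y1" and x2_neq_y2: "x2 \<noteq> y2"
  using mgraph_ends(1)[OF mgraph1 f1(1)] mgraph_ends(1)[OF mgraph2 f2(1)] f1(2) f2(2)
  by (auto simp: card_insert_if)

lemma ends_in_verts: "x1 \<in> verts G1" "y1 \<in> verts G1" "x2 \<in> verts G2" "y2 \<in> verts G2"
  using mgraph_ends(2)[OF mgraph1 f1(1)] mgraph_ends(2)[OF mgraph2 f2(1)] f1(2) f2(2) by auto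

lemma verts_G: "verts G = Inl ` verts G1 \<union> Inr ` verts G2"
  by (simp add: G_def cut_conn_def)

lemma edges_G: "edges G = E1 ` (edges G1 - {f1}) \<union> E2 ` (edges G2 - {f2}) \<union> {XX, YY}"
  by (simp add: G_def cut_conn_def)

lemma ends_G [simp]:
  "ends G (E1 a) = Inl ` ends G1 a" "ends G (E2 b) = Inr ` ends G2 b"
  "ends G XX = {Inl x1, Inr x2}" "ends G YY = {Inl y1, Inr y2}"
  by (simp_all add: G_def cut_conn_def)

lemma in_edges_G [simp]:
  "E1 a \<in> edges G \<longleftrightarrow> a \<in> edges G1 \<and> a \<noteq> f1" "E2 b \<in> edges G \<longleftrightarrow> b \<in> edges G2 \<and> b \<noteq> f2"
  "XX \<in> edges G" "YY \<in> edges G"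
  by (auto simp: edges_G)

lemma in_verts_G [simp]: "Inl v \<in> verts G \<longleftrightarrow> v \<in> verts G1" "Inr w \<in> verts G \<longleftrightarrow> w \<in> verts G2"
  by (auto simp: verts_G)

lemma mgraph_G: "mgraph G"
  unfolding mgraph_def
proof (intro conjI)
  show "finite (verts G)" "finite (edges G)"
    using mgraph_finite[OF mgraph1] mgraph_finite[OF mgraph2] by (simp_all add: verts_G edges_G)
  show "\<forall>e\<in>edges G. ends G e \<subseteq> verts G \<and> card (ends G e) = 2"
  proof
    fix e assume "e \<in> edges G"
    then consider (E1) a where "e = E1 a" "a \<in> edges G1" | (E2) b where "e = E2 b" "b \<in> edges G2"
      | "e = XX" | "e = YY"
      by (auto simp: edges_G)
    then show "ends G e \<subseteq> verts G \<and> card (ends G e) = 2"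
    proof cases
      case E1
      then show ?thesis using mgraph_ends[OF mgraph1 E1(2)] by (auto simp: card_image verts_G)
    next
      case E2
      then show ?thesis using mgraph_ends[OF mgraph2 E2(2)] by (auto simp: card_image verts_G)
    qed (use ends_in_verts in auto)
  qed
qed

lemma cut_edges_left_side: "cut_edges G (Inl ` verts G1) = {XX, YY}"
proof -
  have "card (ends G (E1 a) \<inter> Inl ` verts G1) = 2" if "a \<in> edges G1" for a
    using mgraph_ends[OF mgraph1 that] by (simp add: card_image Int_absorb2 image_mono)
  moreover have "ends G (E2 b) \<inter> Inl ` verts G1 = {}" for b by auto
  moreover have "ends G XX \<inter> Inl ` verts G1 = {Inl x1}" "ends G YY \<inter> Inl ` verts G1 = {Inl y1}"
    using ends_in_verts by auto
  ultimately show ?thesis by (auto simp: cut_edges_def edges_G)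
qed

lemma perfect_matching_XX_iff_YY:
  assumes "even (card (verts G1))" "perfect_matching G M"
  shows "XX \<in> M \<longleftrightarrow> YY \<in> M"
proof -
  have "Inl ` verts G1 \<subseteq> verts G" by (simp add: verts_G)
  from perfect_matching_even_card_cut_edges_iff[OF mgraph_G assms(2) this]
  have "even (card (M \<inter> {XX, YY}))"
    using assms(1) by (simp add: cut_edges_left_side card_image)
  then show ?thesis by (cases "XX \<in> M"; cases "YY \<in> M") auto
qed

definition restrict1 :: "('e1,'e2) cedge set \<Rightarrow> 'e1 set" where
  "restrict1 M = {a. E1 a \<in> M} \<union> (if XX \<in> M then {f1} else {})"

definition restrict2 :: "('e1,'e2) cedge set \<Rightarrow> 'e2 set" where
  "restrict2 M = {b. E2 b \<in> M} \<union> (if XX \<in> M then {f2} else {})"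

definition glue :: "'e1 set \<Rightarrow> 'e2 set \<Rightarrow> ('e1,'e2) cedge set" where
  "glue M1 M2 = E1 ` (M1 - {f1}) \<union> E2 ` (M2 - {f2}) \<union> (if f1 \<in> M1 then {XX, YY} else {})"

text \<open>At a vertex of \<open>G1\<close>, the edges of \<open>M\<close> correspond to those of \<open>restrict1 M\<close>, with \<open>XX\<close> and
  \<open>YY\<close> both standing for \<open>f1\<close>; symmetrically for \<open>G2\<close>.\<close>

lemma card_incident_left:
  assumes "M \<subseteq> edges G" "XX \<in> M \<longleftrightarrow> YY \<in> M"
  shows "card {e\<in>M. Inl v \<in> ends G e} = card {a\<in>restrict1 M. v \<in> ends G1 a}"
proof (rule bij_betw_same_card)
  let ?\<pi> = "\<lambda>e. case e of E1 a \<Rightarrow> a | _ \<Rightarrow> f1"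
  show "bij_betw ?\<pi> {e\<in>M. Inl v \<in> ends G e} {a\<in>restrict1 M. v \<in> ends G1 a}"
  proof (rule bij_betw_imageI)
    show "inj_on ?\<pi> {e\<in>M. Inl v \<in> ends G e}"
      using assms(1) x1_neq_y1 by (auto simp: inj_on_def split: cedge.splits)
    show "?\<pi> ` {e\<in>M. Inl v \<in> ends G e} = {a\<in>restrict1 M. v \<in> ends G1 a}"
    proof
      show "?\<pi> ` {e\<in>M. Inl v \<in> ends G e} \<subseteq> {a\<in>restrict1 M. v \<in> ends G1 a}"
        using assms f1(2) by (auto simp: restrict1_def split: cedge.splits)
      show "{a\<in>restrict1 M. v \<in> ends G1 a} \<subseteq> ?\<pi> ` {e\<in>M. Inl v \<in> ends G e}"
      proof
        fix a assume a: "a \<in> {a\<in>restrict1 M. v \<in> ends G1 a}"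
        show "a \<in> ?\<pi> ` {e\<in>M. Inl v \<in> ends G e}"
        proof (cases "E1 a \<in> M")
          case True
          then show ?thesis using a by (auto intro: rev_image_eqI[of "E1 a"])
        next
          case False
          then have "a = f1" "XX \<in> M" "YY \<in> M" "v = x1 \<or> v = y1"
            using a assms(2) f1(2) by (auto simp: restrict1_def split: if_splits)
          then show ?thesis by (auto intro: rev_image_eqI[of XX] rev_image_eqI[of YY])
        qed
      qed
    qed
  qed
qed

lemma card_incident_right:
  assumes "M \<subseteq> edges G" "XX \<in> M \<longleftrightarrow> YY \<in> M"
  shows "card {e\<in>M. Inr w \<in> ends G e} = card {b\<in>restrict2 M. w \<in> ends G2 b}"
proof (rule bij_betw_same_card)
  let ?\<pi> = "\<lambda>e. case e of E2 b \<Rightarrow> b | _ \<Rightarrow> f2"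
  show "bij_betw ?\<pi> {e\<in>M. Inr w \<in> ends G e} {b\<in>restrict2 M. w \<in> ends G2 b}"
  proof (rule bij_betw_imageI)
    show "inj_on ?\<pi> {e\<in>M. Inr w \<in> ends G e}"
      using assms(1) x2_neq_y2 by (auto simp: inj_on_def split: cedge.splits)
    show "?\<pi> ` {e\<in>M. Inr w \<in> ends G e} = {b\<in>restrict2 M. w \<in> ends G2 b}"
    proof
      show "?\<pi> ` {e\<in>M. Inr w \<in> ends G e} \<subseteq> {b\<in>restrict2 M. w \<in> ends G2 b}"
        using assms f2(2) by (auto simp: restrict2_def split: cedge.splits)
      show "{b\<in>restrict2 M. w \<in> ends G2 b} \<subseteq> ?\<pi> ` {e\<in>M. Inr w \<in> ends G e}"
      proof
        fix b assume b: "b \<in> {b\<in>restrict2 M. w \<in> ends G2 b}"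
        show "b \<in> ?\<pi> ` {e\<in>M. Inr w \<in> ends G e}"
        proof (cases "E2 b \<in> M")
          case True
          then show ?thesis using b by (auto intro: rev_image_eqI[of "E2 b"])
        next
          case False
          then have "b = f2" "XX \<in> M" "YY \<in> M" "w = x2 \<or> w = y2"
            using b assms(2) f2(2) by (auto simp: restrict2_def split: if_splits)
          then show ?thesis by (auto intro: rev_image_eqI[of XX] rev_image_eqI[of YY])
        qed
      qed
    qed
  qed
qed

lemma perfect_matching_iff_restrict:
  assumes "M \<subseteq> edges G" "XX \<in> M \<longleftrightarrow> YY \<in> M"
  shows "perfect_matching G M \<longleftrightarrow>
    perfect_matching G1 (restrict1 M) \<and> perfect_matching G2 (restrict2 M)"
proof -
  have "restrict1 M \<subseteq> edges G1" "restrict2 M \<subseteq> edges G2"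
    using assms(1) f1(1) f2(1) by (auto simp: restrict1_def restrict2_def)
  moreover have "(\<forall>u\<in>verts G. card {e\<in>M. u \<in> ends G e} = 1) \<longleftrightarrow>
      (\<forall>v\<in>verts G1. card {e\<in>M. Inl v \<in> ends G e} = 1) \<and>
      (\<forall>w\<in>verts G2. card {e\<in>M. Inr w \<in> ends G e} = 1)"
    by (auto simp: verts_G)
  ultimately show ?thesis
    using assms(1) card_incident_left[OF assms] card_incident_right[OF assms]
    by (simp add: perfect_matching_def)
qed

lemma restrict_glue:
  assumes "f1 \<in> M1 \<longleftrightarrow> f2 \<in> M2"
  shows "restrict1 (glue M1 M2) = M1" "restrict2 (glue M1 M2) = M2"
  using assms by (auto simp: restrict1_def restrict2_def glue_def)

lemma glue_restrict:
  assumes "M \<subseteq> edges G" "XX \<in> M \<longleftrightarrow> YY \<in> M"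
  shows "glue (restrict1 M) (restrict2 M) = M"
proof (rule set_eqI)
  fix e
  have "E1 f1 \<notin> M" "E2 f2 \<notin> M" using assms(1) by auto
  then show "e \<in> glue (restrict1 M) (restrict2 M) \<longleftrightarrow> e \<in> M"
    using assms(2) by (cases e) (auto simp: glue_def restrict1_def restrict2_def)
qed

lemma glue_subset_edges: "M1 \<subseteq> edges G1 \<Longrightarrow> M2 \<subseteq> edges G2 \<Longrightarrow> glue M1 M2 \<subseteq> edges G"
  by (auto simp: glue_def)

lemma glue_XX_YY: "XX \<in> glue M1 M2 \<longleftrightarrow> f1 \<in> M1" "YY \<in> glue M1 M2 \<longleftrightarrow> f1 \<in> M1"
  by (auto simp: glue_def)

definition matching_pairs :: "('e1 set \<times> 'e2 set) set" where
  "matching_pairs =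
    {(M1, M2). perfect_matching G1 M1 \<and> perfect_matching G2 M2 \<and> (f1 \<in> M1 \<longleftrightarrow> f2 \<in> M2)}"

lemma bij_betw_glue:
  assumes "even (card (verts G1))"
  shows "bij_betw (\<lambda>(M1, M2). glue M1 M2) matching_pairs {M. perfect_matching G M}"
proof -
  have pm_G: "M \<subseteq> edges G" "XX \<in> M \<longleftrightarrow> YY \<in> M" if "perfect_matching G M" for M
    using that perfect_matching_XX_iff_YY[OF assms] by (auto simp: perfect_matching_def)
  have glue_pm: "perfect_matching G (glue M1 M2)" if "(M1, M2) \<in> matching_pairs" for M1 M2
  proof -
    have "perfect_matching G1 M1" "perfect_matching G2 M2" "f1 \<in> M1 \<longleftrightarrow> f2 \<in> M2"
      using that by (auto simp: matching_pairs_def)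
    then show ?thesis
      using perfect_matching_iff_restrict[OF glue_subset_edges] restrict_glue glue_XX_YY
      by (simp add: perfect_matching_def)
  qed
  have restrict_pm: "(restrict1 M, restrict2 M) \<in> matching_pairs" if M: "perfect_matching G M" for M
  proof -
    have "E1 f1 \<notin> M" "E2 f2 \<notin> M" using pm_G(1)[OF M] by auto
    then have "f1 \<in> restrict1 M \<longleftrightarrow> f2 \<in> restrict2 M" by (simp add: restrict1_def restrict2_def)
    moreover have "perfect_matching G1 (restrict1 M) \<and> perfect_matching G2 (restrict2 M)"
      using perfect_matching_iff_restrict[OF pm_G[OF M]] M by simp
    ultimately show ?thesis by (simp add: matching_pairs_def)
  qed
  have "restrict1 (glue M1 M2) = M1" "restrict2 (glue M1 M2) = M2"
    if "(M1, M2) \<in> matching_pairs" for M1 M2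
    using that restrict_glue by (simp_all add: matching_pairs_def)
  then show ?thesis
    by (intro bij_betw_byWitness[where f' = "\<lambda>M. (restrict1 M, restrict2 M)"])
      (auto simp: glue_restrict pm_G glue_pm restrict_pm)
qed

lemma num_pm_G:
  assumes "even (card (verts G1))"
  shows "num_pm G P = card {(M1, M2)\<in>matching_pairs. P (glue M1 M2)}"
proof -
  let ?glue = "\<lambda>(M1, M2). glue M1 M2" and ?S = "{(M1, M2)\<in>matching_pairs. P (glue M1 M2)}"
  have bij: "bij_betw ?glue matching_pairs {M. perfect_matching G M}"
    by (rule bij_betw_glue[OF assms])
  have "?glue ` ?S = {M. perfect_matching G M \<and> P M}"
  proof
    show "?glue ` ?S \<subseteq> {M. perfect_matching G M \<and> P M}"
      using bij_betw_apply[OF bij] by fastforce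
    show "{M. perfect_matching G M \<and> P M} \<subseteq> ?glue ` ?S"
    proof
      fix M assume M: "M \<in> {M. perfect_matching G M \<and> P M}"
      then have "M \<in> ?glue ` matching_pairs" using bij by (simp add: bij_betw_def)
      then obtain M1 M2 where "(M1, M2) \<in> matching_pairs" "M = glue M1 M2" by auto
      then show "M \<in> ?glue ` ?S" using M by (auto intro: image_eqI[of _ _ "(M1, M2)"])
    qed
  qed
  moreover have "inj_on ?glue ?S"
    using bij_betw_imp_inj_on[OF bij] by (rule inj_on_subset) blast
  ultimately show ?thesis using card_image by fastforce
qed

lemma finite_perfect_matchings_12:
  "finite {M. perfect_matching G1 M \<and> Q1 M}" "finite {M. perfect_matching G2 M \<and> Q2 M}"
  using finite_perfect_matchings mgraph_finite(2) mgraph1 mgraph2 by blast+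

lemma num_pm_E1:
  assumes "even (card (verts G1))" "e \<noteq> f1"
  shows "num_pm G (\<lambda>M. E1 e \<in> M) =
    num_pm G1 (\<lambda>M. e \<in> M \<and> f1 \<in> M) * num_pm G2 (\<lambda>M. f2 \<in> M) +
    num_pm G1 (\<lambda>M. e \<in> M \<and> f1 \<notin> M) * num_pm G2 (\<lambda>M. f2 \<notin> M)"
proof -
  have "num_pm G (\<lambda>M. E1 e \<in> M) = card {(M1, M2)\<in>matching_pairs. E1 e \<in> glue M1 M2}"
    by (rule num_pm_G[OF assms(1)])
  also have "{(M1, M2)\<in>matching_pairs. E1 e \<in> glue M1 M2} =
    {(M1, M2). (perfect_matching G1 M1 \<and> e \<in> M1) \<and> perfect_matching G2 M2 \<and> (f1 \<in> M1 \<longleftrightarrow> f2 \<in> M2)}"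
    using assms(2) by (auto simp: matching_pairs_def glue_def)
  also have "card \<dots> = num_pm G1 (\<lambda>M. e \<in> M \<and> f1 \<in> M) * num_pm G2 (\<lambda>M. f2 \<in> M) +
      num_pm G1 (\<lambda>M. e \<in> M \<and> f1 \<notin> M) * num_pm G2 (\<lambda>M. f2 \<notin> M)"
    using card_pairs_iff[of "\<lambda>M. perfect_matching G1 M \<and> e \<in> M" "perfect_matching G2"
        "\<lambda>M. f1 \<in> M" "\<lambda>M. f2 \<in> M"]
      finite_perfect_matchings_12(1) finite_perfect_matchings_12(2)[of "\<lambda>_. True"]
    by (simp add: conj_assoc)
  finally show ?thesis .
qed

lemma num_pm_E2:
  assumes "even (card (verts G1))" "e \<noteq> f2"
  shows "num_pm G (\<lambda>M. E2 e \<in> M) =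
    num_pm G1 (\<lambda>M. f1 \<in> M) * num_pm G2 (\<lambda>M. e \<in> M \<and> f2 \<in> M) +
    num_pm G1 (\<lambda>M. f1 \<notin> M) * num_pm G2 (\<lambda>M. e \<in> M \<and> f2 \<notin> M)"
proof -
  have "num_pm G (\<lambda>M. E2 e \<in> M) = card {(M1, M2)\<in>matching_pairs. E2 e \<in> glue M1 M2}"
    by (rule num_pm_G[OF assms(1)])
  also have "{(M1, M2)\<in>matching_pairs. E2 e \<in> glue M1 M2} =
    {(M1, M2). perfect_matching G1 M1 \<and> (perfect_matching G2 M2 \<and> e \<in> M2) \<and> (f1 \<in> M1 \<longleftrightarrow> f2 \<in> M2)}"
    using assms(2) by (auto simp: matching_pairs_def glue_def)
  also have "card \<dots> = num_pm G1 (\<lambda>M. f1 \<in> M) * num_pm G2 (\<lambda>M. e \<in> M \<and> f2 \<in> M) +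
      num_pm G1 (\<lambda>M. f1 \<notin> M) * num_pm G2 (\<lambda>M. e \<in> M \<and> f2 \<notin> M)"
    using card_pairs_iff[of "perfect_matching G1" "\<lambda>M. perfect_matching G2 M \<and> e \<in> M"
        "\<lambda>M. f1 \<in> M" "\<lambda>M. f2 \<in> M"]
      finite_perfect_matchings_12(1)[of "\<lambda>_. True"] finite_perfect_matchings_12(2)
    by (simp add: conj_assoc)
  finally show ?thesis .
qed

lemma num_pm_XX_YY:
  assumes "even (card (verts G1))"
  shows "num_pm G (\<lambda>M. XX \<in> M) = num_pm G1 (\<lambda>M. f1 \<in> M) * num_pm G2 (\<lambda>M. f2 \<in> M)"
    "num_pm G (\<lambda>M. YY \<in> M) = num_pm G1 (\<lambda>M. f1 \<in> M) * num_pm G2 (\<lambda>M. f2 \<in> M)"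
proof -
  have "{(M1, M2)\<in>matching_pairs. XX \<in> glue M1 M2} =
      {M1. perfect_matching G1 M1 \<and> f1 \<in> M1} \<times> {M2. perfect_matching G2 M2 \<and> f2 \<in> M2}"
    "{(M1, M2)\<in>matching_pairs. YY \<in> glue M1 M2} =
      {M1. perfect_matching G1 M1 \<and> f1 \<in> M1} \<times> {M2. perfect_matching G2 M2 \<and> f2 \<in> M2}"
    by (auto simp: matching_pairs_def glue_def)
  then show "num_pm G (\<lambda>M. XX \<in> M) = num_pm G1 (\<lambda>M. f1 \<in> M) * num_pm G2 (\<lambda>M. f2 \<in> M)"
    "num_pm G (\<lambda>M. YY \<in> M) = num_pm G1 (\<lambda>M. f1 \<in> M) * num_pm G2 (\<lambda>M. f2 \<in> M)"
    using num_pm_G[OF assms] by (simp_all add: card_cartesian_product)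
qed

lemma lonely_E2_iff:
  assumes "cubic G1" "bridgeless G1" "lonely G1 f1" "e \<in> edges G2" "e \<noteq> f2" "lonely G2 e"
  shows "lonely G (E2 e) \<longleftrightarrow> f2 \<in> (THE M. perfect_matching G2 M \<and> e \<in> M)"
proof -
  have "\<exists>!M. perfect_matching G2 M \<and> e \<in> M"
    using assms(6) unfolding lonely_def card_Collect_eq_1_iff by blast
  then obtain N where N: "perfect_matching G2 N \<and> e \<in> N"
    "\<And>M. perfect_matching G2 M \<and> e \<in> M \<Longrightarrow> M = N"
    by (elim ex1E) blast
  then have N_iff: "\<And>M. perfect_matching G2 M \<and> e \<in> M \<longleftrightarrow> M = N" by blast
  have "(THE M. perfect_matching G2 M \<and> e \<in> M) = N" using N by (rule the_equality)
  moreover have "num_pm G2 (\<lambda>M. e \<in> M \<and> f2 \<in> M) = (if f2 \<in> N then 1 else 0)"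
    "num_pm G2 (\<lambda>M. e \<in> M \<and> f2 \<notin> M) = (if f2 \<in> N then 0 else 1)"
    using card_Collect_conj_unique[of "\<lambda>M. perfect_matching G2 M \<and> e \<in> M" N, OF N_iff]
    by (simp_all add: conj_assoc)
  then have "num_pm G (\<lambda>M. E2 e \<in> M) = (if f2 \<in> N then 1 else num_pm G1 (\<lambda>M. f1 \<notin> M))"
    using num_pm_E2[OF cubic_even_card_verts[OF assms(1)] assms(5)] assms(3)
      by (simp add: lonely_def)
  moreover have "num_pm G1 (\<lambda>M. f1 \<notin> M) \<noteq> 1"
    using cubic_bridgeless_num_pm_avoiding[OF assms(1,2) f1(1)] by simp
  ultimately show ?thesis using assms(4,5) by (simp add: lonely_def)
qed

lemma lonely_XX_YY:
  assumes "even (card (verts G1))" "lonely G1 f1" "lonely G2 f2"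
  shows "lonely G XX" "lonely G YY"
  using assms num_pm_XX_YY[OF assms(1)] by (simp_all add: lonely_def)

lemma not_lonely_if_not_lonely_f1:
  assumes "cubic G1" "bridgeless G1" "\<not> lonely G1 f1"
  shows "e \<in> edges G2 - {f2} \<Longrightarrow> \<not> lonely G (E2 e)" "\<not> lonely G XX" "\<not> lonely G YY"
proof -
  have even: "even (card (verts G1))" by (rule cubic_even_card_verts[OF assms(1)])
  have a: "2 \<le> num_pm G1 (\<lambda>M. f1 \<in> M)"
    using cubic_bridgeless_num_pm_containing[OF assms(1,2) f1(1)] assms(3) f1(1)
      by (simp add: lonely_def)
  have b: "2 \<le> num_pm G1 (\<lambda>M. f1 \<notin> M)"
    by (rule cubic_bridgeless_num_pm_avoiding[OF assms(1,2) f1(1)])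
  show "\<not> lonely G (E2 e)" if "e \<in> edges G2 - {f2}"
    using num_pm_E2[OF even] nat_sum_weighted_neq_1[OF a b] that by (simp add: lonely_def)
  show "\<not> lonely G XX" "\<not> lonely G YY"
    using num_pm_XX_YY[OF even] a by (simp_all add: lonely_def)
qed

lemma not_lonely_E1:
  assumes "even (card (verts G1))" "cubic G2" "bridgeless G2" "e \<in> edges G1 - {f1}" "\<not> lonely G1 e"
  shows "\<not> lonely G (E1 e)"
proof
  assume "lonely G (E1 e)"
  moreover have "e \<noteq> f1" using assms(4) by simp
  ultimately have "num_pm G1 (\<lambda>M. e \<in> M \<and> f1 \<in> M) * num_pm G2 (\<lambda>M. f2 \<in> M) +
      num_pm G1 (\<lambda>M. e \<in> M \<and> f1 \<notin> M) * num_pm G2 (\<lambda>M. f2 \<notin> M) = 1"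
    using num_pm_E1[OF assms(1)] by (simp add: lonely_def)
  then have "num_pm G1 (\<lambda>M. e \<in> M \<and> f1 \<in> M) + num_pm G1 (\<lambda>M. e \<in> M \<and> f1 \<notin> M) = 1"
    using nat_sum_weighted_eq_1 cubic_bridgeless_num_pm_containing[OF assms(2,3) f2(1)]
      cubic_bridgeless_num_pm_avoiding[OF assms(2,3) f2(1)] by blast
  then show False
    using num_pm_split[OF mgraph_finite(2)[OF mgraph1], of "\<lambda>M. e \<in> M" "\<lambda>M. f1 \<in> M"] assms(4,5)
    by (simp add: lonely_def)
qed

lemma not_lonely_E2:
  assumes "cubic G1" "bridgeless G1" "e \<in> edges G2 - {f2}" "\<not> lonely G2 e"
  shows "\<not> lonely G (E2 e)"
proof
  assume "lonely G (E2 e)"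
  moreover have "e \<noteq> f2" using assms(3) by simp
  ultimately have "num_pm G2 (\<lambda>M. e \<in> M \<and> f2 \<in> M) * num_pm G1 (\<lambda>M. f1 \<in> M) +
      num_pm G2 (\<lambda>M. e \<in> M \<and> f2 \<notin> M) * num_pm G1 (\<lambda>M. f1 \<notin> M) = 1"
    using num_pm_E2[OF cubic_even_card_verts[OF assms(1)]] by (simp add: lonely_def mult.commute)
  then have "num_pm G2 (\<lambda>M. e \<in> M \<and> f2 \<in> M) + num_pm G2 (\<lambda>M. e \<in> M \<and> f2 \<notin> M) = 1"
    using nat_sum_weighted_eq_1 cubic_bridgeless_num_pm_containing[OF assms(1,2) f1(1)]
      cubic_bridgeless_num_pm_avoiding[OF assms(1,2) f1(1)] by blast
  then show False
    using num_pm_split[OF mgraph_finite(2)[OF mgraph2], of "\<lambda>M. e \<in> M" "\<lambda>M. f2 \<in> M"] assms(3,4)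
    by (simp add: lonely_def)
qed

end

theorem mainTheorem2:
  fixes G1 :: "('v1,'e1) mgraph" and G2 :: "('v2,'e2) mgraph"
  assumes "cubic G1" and "bridgeless G1" and "cubic G2" and "bridgeless G2"
    and "f1 \<in> edges G1" and "ends G1 f1 = {x1, y1}"
    and "f2 \<in> edges G2" and "ends G2 f2 = {x2, y2}"
    and "G = cut_conn G1 f1 x1 y1 G2 f2 x2 y2"
  shows
    "(lonely G1 f1 \<longrightarrow>
        (\<forall>e\<in>edges G2. e \<noteq> f2 \<longrightarrow> lonely G2 e \<longrightarrow>
            (lonely G (E2 e) \<longleftrightarrow> f2 \<in> (THE M. perfect_matching G2 M \<and> e \<in> M))) \<and>
        (lonely G2 f2 \<longrightarrow> lonely G XX \<and> lonely G YY))
     \<and> (\<not> lonely G1 f1 \<longrightarrow>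
        (\<forall>e\<in>edges G2 - {f2}. \<not> lonely G (E2 e)) \<and> \<not> lonely G XX \<and> \<not> lonely G YY)
     \<and> (\<forall>e\<in>edges G1 - {f1}. \<not> lonely G1 e \<longrightarrow> \<not> lonely G (E1 e))
     \<and> (\<forall>e\<in>edges G2 - {f2}. \<not> lonely G2 e \<longrightarrow> \<not> lonely G (E2 e))"
proof -
  interpret two_cut_connection G1 G2 f1 x1 y1 f2 x2 y2 G
    using assms by unfold_locales (simp_all add: cubic_def)
  have even: "even (card (verts G1))" by (rule cubic_even_card_verts[OF assms(1)])
  show ?thesis
    using lonely_E2_iff[OF assms(1,2)] lonely_XX_YY[OF even]
      not_lonely_if_not_lonely_f1[OF assms(1,2)]
      not_lonely_E1[OF even assms(3,4)] not_lonely_E2[OF assms(1,2)]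
    by blast
qed

end
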